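(* Let $\Omega$ be strictly convex. Let $h_0$ be continuous on $\bar\Omega\times\mathbb{R}^3\setminus\gamma_0$, and let $q(t,x,v)$ be continuous in the interior of $[0,\infty)\times\Omega\times\mathbb{R}^3$ with $\sup_{[0,\infty)\times\Omega\times\mathbb{R}^3}|q(t,x,v)/\nu(v)|<\infty$. Assume the compatibility condition $h_0(x,v)=h_0(x,-v)$ on $\gamma_-$. Then the solution $h$ of $\partial_th+v\cdot\nabla_xh+\nu h=q$, $h(0,x,v)=h_0$, with the bounce-back condition $h(t,x,v)=h(t,x,-v)$ for $x\in\partial\Omega$, is continuous on $[0,\infty)\times\{\bar\Omega\times\mathbb{R}^3\setminus\gamma_0\}$.
   Context: $\Omega=\{x\in\mathbb{R}^3:\xi(x)<0\}$ is connected and bounded, $\xi$ smooth with $\nabla\xi\neq0$ on $\{\xi=0\}$; $n(x)=\nabla\xi(x)/|\nabla\xi(x)|$. Strictly convex: there is $c_\xi>0$ with $\partial_{ij}\xi(x)\zeta^i\zeta^j\ge c_\xi|\zeta|^2$ for $\xi(x)\le0$, $\zeta\in\mathbb{R}^3$. $\gamma_-=\{(x,v)\in\partial\Omega\times\mathbb{R}^3:n(x)\cdot v<0\}$, $\gamma_0=\{(x,v)\in\partial\Omega\times\mathbb{R}^3:n(x)\cdot v=0\}$. $\nu(v)=\int|v-u|^\gamma e^{-|u|^2/2}q_0(\theta)\,du\,d\omega$ with $0\le\gamma\le1$, $0\le q_0(\theta)\le C|\cos\theta|$, $\cos\theta=(u-v)\cdot\omega/|u-v|$. *)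

theory Defs
  imports "HOL-Analysis.Analysis"
begin

text \<open>Iterated directional (Frechet) derivatives of a scalar function on R^3:
  dd f [d1,...,dk] is the derivative in direction d1 of ... of the derivative in direction dk.\<close>
fun dd :: "(real^3 \<Rightarrow> real) \<Rightarrow> (real^3) list \<Rightarrow> real^3 \<Rightarrow> real" where
  "dd f [] = f"
| "dd f (d # ds) = (\<lambda>x. frechet_derivative (dd f ds) (at x) d)"

definition smooth3 :: "(real^3 \<Rightarrow> real) \<Rightarrow> bool" where
  "smooth3 f \<longleftrightarrow> (\<forall>ds x. dd f ds differentiable (at x))"

definition grad :: "(real^3 \<Rightarrow> real) \<Rightarrow> real^3 \<Rightarrow> real^3" where
  "grad \<xi> x = (\<chi> i. frechet_derivative \<xi> (at x) (axis i 1))"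

definition normal :: "(real^3 \<Rightarrow> real) \<Rightarrow> real^3 \<Rightarrow> real^3" where
  "normal \<xi> x = (1 / norm (grad \<xi> x)) *\<^sub>R grad \<xi> x"

definition dom :: "(real^3 \<Rightarrow> real) \<Rightarrow> (real^3) set" where
  "dom \<xi> = {x. \<xi> x < 0}"

definition gamma_minus :: "(real^3 \<Rightarrow> real) \<Rightarrow> ((real^3) \<times> (real^3)) set" where
  "gamma_minus \<xi> = {(x, v). x \<in> frontier (dom \<xi>) \<and> normal \<xi> x \<bullet> v < 0}"

definition gamma_zero :: "(real^3 \<Rightarrow> real) \<Rightarrow> ((real^3) \<times> (real^3)) set" where
  "gamma_zero \<xi> = {(x, v). x \<in> frontier (dom \<xi>) \<and> normal \<xi> x \<bullet> v = 0}"

text \<open>Spherical coordinates for omega in S^2; surface measure is sin(phi) dphi dpsi.\<close>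
definition sph :: "real \<Rightarrow> real \<Rightarrow> real^3" where
  "sph \<phi> \<psi> = vector [sin \<phi> * cos \<psi>, sin \<phi> * sin \<psi>, cos \<phi>]"

definition nu :: "real \<Rightarrow> (real \<Rightarrow> real) \<Rightarrow> real^3 \<Rightarrow> real" where
  "nu gam q0 v =
     (LINT u|lborel. set_lebesgue_integral lborel {0..pi} (\<lambda>\<phi>.
        set_lebesgue_integral lborel {0..2*pi} (\<lambda>\<psi>.
        sin \<phi> * (norm (v - u) powr gam * exp (- (norm u)\<^sup>2 / 2)
                 * q0 (arccos (((u - v) \<bullet> sph \<phi> \<psi>) / norm (u - v)))))))"

text \<open>Mild solution (Duhamel formula along characteristics) of
  d_t h + v.grad_x h + nu h = q, h(0) = h0, bounce-back h(t,x,v) = h(t,x,-v) on the boundary.\<close>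
definition bb_solution ::
  "(real^3 \<Rightarrow> real) \<Rightarrow> real \<Rightarrow> (real \<Rightarrow> real) \<Rightarrow> (real^3 \<Rightarrow> real^3 \<Rightarrow> real)
   \<Rightarrow> (real \<Rightarrow> real^3 \<Rightarrow> real^3 \<Rightarrow> real) \<Rightarrow> (real \<Rightarrow> real^3 \<Rightarrow> real^3 \<Rightarrow> real) \<Rightarrow> bool" where
  "bb_solution \<xi> gam q0 h0 q h \<longleftrightarrow>
     (\<forall>x v. x \<in> closure (dom \<xi>) \<longrightarrow> h 0 x v = h0 x v) \<and>
     (\<forall>t x v. t > 0 \<longrightarrow> x \<in> frontier (dom \<xi>) \<longrightarrow> h t x v = h t x (- v)) \<and>
     (\<forall>t \<tau> x v. 0 \<le> t \<longrightarrow> 0 \<le> \<tau> \<longrightarrow> (\<forall>s\<in>{0..\<tau>}. x + s *\<^sub>R v \<in> closure (dom \<xi>)) \<longrightarrow>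
        h (t + \<tau>) (x + \<tau> *\<^sub>R v) v =
          exp (- nu gam q0 v * \<tau>) * h t x v
          + integral {0..\<tau>} (\<lambda>s. exp (- nu gam q0 v * (\<tau> - s)) * q (t + s) (x + s *\<^sub>R v) v))"

end

theory Submission
  imports Defs "HOL-Probability.Distributions"
begin

text \<open>Along backward characteristics \<open>s \<mapsto> x - s v\<close> the mild solution is given by the Duhamel
  formula: either the characteristic stays in \<open>closure \<Omega>\<close> down to time \<open>0\<close>, and \<open>h\<close> is expressed
  through \<open>h\<^sub>0\<close> and the source, or it reaches the boundary after the backward exit time \<open>t\<^sub>b(x, v)\<close>,
  where bounce-back continues it with velocity \<open>-v\<close>. Strict convexity makes every exit transversal,
  so \<open>t\<^sub>b\<close> is continuous away from the grazing set \<open>\<gamma>\<^sub>0\<close>, and after a bounce the particle runs back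
  along the same chord, whose length is at least \<open>t\<^sub>b\<close>. Hence only finitely many bounces happen in
  bounded time and continuity follows by induction on their number; at a bounce instant the two
  Duhamel descriptions agree by the compatibility condition on \<open>h\<^sub>0\<close>. The collision frequency \<open>\<nu>\<close>
  is continuous by dominated convergence, which with \<open>|q| \<le> M \<nu>\<close> bounds the source terms locally.\<close>

section \<open>The collision frequency\<close>

lemma integrable_exp_neg_sq_div_8: "integrable lborel (\<lambda>x::real. exp (- x\<^sup>2 / 8))"
proof -
  have "integrable lborel (\<lambda>x. sqrt (2*pi*2\<^sup>2) * normal_density 0 2 x)"
    by (intro integrable_mult_right) simp
  moreover have "(\<lambda>x. sqrt (2*pi*2\<^sup>2) * normal_density 0 2 x) = (\<lambda>x::real. exp (- x\<^sup>2 / 8))"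
    by (auto simp: normal_density_def)
  ultimately show ?thesis by metis
qed

lemma integrable_exp_neg_norm_sq_div_8:
  "integrable lborel (\<lambda>w::'a::euclidean_space. exp (- (norm w)\<^sup>2 / 8))"
proof -
  interpret product_sigma_finite "\<lambda>_. lborel" by standard
  let ?g = "\<lambda>f. \<Sum>b\<in>(Basis::'a set). f b *\<^sub>R b"
  have m: "?g \<in> measurable (\<Pi>\<^sub>M b\<in>Basis. lborel) borel" by measurable
  have pi: "integrable (\<Pi>\<^sub>M b\<in>(Basis::'a set). lborel) (\<lambda>f. \<Prod>b\<in>Basis. exp (- (f b)\<^sup>2 / (8::real)))"
    by (rule product_integrable_prod) (use integrable_exp_neg_sq_div_8 in simp_all)
  have eq: "exp (- (norm (?g f))\<^sup>2 / 8) = (\<Prod>b\<in>Basis. exp (- (f b)\<^sup>2 / 8))" for f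
  proof -
    have "(norm (?g f))\<^sup>2 = (\<Sum>b\<in>Basis. (?g f \<bullet> b)\<^sup>2)"
      unfolding power2_norm_eq_inner by (subst euclidean_inner) (simp only: power2_eq_square)
    also have "\<dots> = (\<Sum>b\<in>Basis. (f b)\<^sup>2)"
      by (intro sum.cong refl) (simp add: inner_sum_left_Basis)
    finally show ?thesis
      by (simp add: exp_sum[symmetric] sum_divide_distrib[symmetric] sum_negf)
  qed
  have "integrable (distr (\<Pi>\<^sub>M b\<in>Basis. lborel) borel ?g) (\<lambda>w::'a. exp (- (norm w)\<^sup>2 / 8))"
    by (subst integrable_distr_eq[OF m]) (simp_all only: eq pi, measurable)
  then show ?thesis by (simp add: lborel_eq[symmetric])
qed

lemma abs_set_integral_Icc_le:
  fixes f :: "real \<Rightarrow> real"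
  assumes "\<And>x. x \<in> {a..b} \<Longrightarrow> \<bar>f x\<bar> \<le> B" "a \<le> b"
  shows "\<bar>set_lebesgue_integral lborel {a..b} f\<bar> \<le> B * (b - a)"
proof -
  have "\<bar>set_lebesgue_integral lborel {a..b} f\<bar> \<le> (LINT x|lborel. norm (indicator {a..b} x *\<^sub>R f x))"
    unfolding set_lebesgue_integral_def using integral_norm_bound by (metis real_norm_def)
  also have "\<dots> \<le> (LINT x|lborel. B * indicator {a..b} x)"
  proof (rule integral_mono')
    show "integrable lborel (\<lambda>x. B * indicator {a..b} x)"
      using assms(2) by (intro integrable_mult_right integrable_real_indicator) (auto simp: emeasure_lborel_Icc)
    show "norm (indicator {a..b} x *\<^sub>R f x) \<le> B * indicator {a..b} x" for x
      using assms(1)[of x] by (auto simp: indicator_def)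
    show "0 \<le> B * indicator {a..b} x" for x
      using assms(1)[of a] assms(2) by (auto simp: indicator_def)
  qed
  also have "\<dots> = B * (b - a)" using assms(2) by simp
  finally show ?thesis .
qed

lemma powr_le_1_plus:
  fixes r g :: real
  assumes "0 \<le> r" "0 \<le> g" "g \<le> 1"
  shows "r powr g \<le> 1 + r"
proof (cases "r \<le> 1")
  case True
  then have "r powr g \<le> 1"
    using assms by (cases "r = 0") (auto intro: powr_le1)
  then show ?thesis using assms by simp
next
  case False
  then have "r powr g \<le> r powr 1" using assms by (intro powr_mono) auto
  then show ?thesis using False by simp
qed

lemma one_plus_mult_exp_neg_sq_le: "(1 + r) * exp (- r\<^sup>2 / 4) \<le> 4 * exp (- r\<^sup>2 / 8)" for r :: real
proof -
  have "1 + r \<le> 4 * (1 + r\<^sup>2 / 8)"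
    using zero_le_power2[of "r - 1"] by (simp add: power2_diff)
  also have "\<dots> \<le> 4 * exp (r\<^sup>2 / 8)" using exp_ge_add_one_self[of "r\<^sup>2/8"] by (intro mult_left_mono) auto
  finally have "(1 + r) * exp (- r\<^sup>2 / 4) \<le> 4 * exp (r\<^sup>2 / 8) * exp (- r\<^sup>2 / 4)"
    by (intro mult_right_mono) auto
  also have "\<dots> = 4 * exp (- r\<^sup>2 / 8)" by (simp add: exp_add[symmetric] mult.assoc)
  finally show ?thesis .
qed

definition angular_kernel :: "(real \<Rightarrow> real) \<Rightarrow> real^3 \<Rightarrow> real" where
  "angular_kernel q0 w = set_lebesgue_integral lborel {0..pi} (\<lambda>\<phi>.
        set_lebesgue_integral lborel {0..2*pi} (\<lambda>\<psi>.
        sin \<phi> * q0 (arccos ((w \<bullet> sph \<phi> \<psi>) / norm w))))"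

lemma nu_eq_angular_kernel:
  "nu gam q0 v = (LINT u|lborel. (norm (v - u) powr gam * exp (- (norm u)\<^sup>2 / 2)) * angular_kernel q0 (u - v))"
  unfolding nu_def angular_kernel_def by (simp add: mult.left_commute[of "sin _"])

lemma sph_eq_axis:
  "sph a b = (sin a * cos b) *\<^sub>R axis 1 1 + (sin a * sin b) *\<^sub>R axis 2 1 + cos a *\<^sub>R axis 3 1"
  by (simp add: sph_def vec_eq_iff forall_3 axis_def)

lemma norm_sph [simp]: "norm (sph a b) = 1"
proof -
  have "(norm (sph a b))\<^sup>2 = (sin a * cos b)\<^sup>2 + (sin a * sin b)\<^sup>2 + (cos a)\<^sup>2"
    unfolding power2_norm_eq_inner unfolding inner_vec_def sum_3 sph_def vector_3 inner_real_def power2_eq_square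
    by (simp only: add.assoc)
  also have "\<dots> = (sin a)\<^sup>2 * ((cos b)\<^sup>2 + (sin b)\<^sup>2) + (cos a)\<^sup>2"
    by (simp only: power_mult_distrib distrib_left)
  finally have "(norm (sph a b))\<^sup>2 = 1" by simp
  then show ?thesis using norm_ge_zero[of "sph a b"] by (simp add: power2_eq_1_iff)
qed

lemma abs_inner_sph_div_norm_le_1: "\<bar>(w \<bullet> sph a b) / norm w\<bar> \<le> 1"
proof (cases "w = 0")
  case False
  have "\<bar>w \<bullet> sph a b\<bar> \<le> norm w" using Cauchy_Schwarz_ineq2[of w "sph a b"] by simp
  then show ?thesis using False by (simp add: abs_divide)
qed simp

text \<open>On the arguments that occur, \<open>arccos\<close> agrees with its continuous truncation
  \<open>arccos (max (-1) (min 1 x))\<close>, which is Borel.\<close>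
lemma angular_kernel_measurable:
  assumes "q0 \<in> borel_measurable borel"
  shows "angular_kernel q0 \<in> borel_measurable borel"
proof -
  define ac where "ac x = arccos (max (-1) (min 1 x))" for x :: real
  have ac: "arccos x = ac x" if "\<bar>x\<bar> \<le> 1" for x
    using that unfolding ac_def by (simp add: abs_le_iff max_absorb2 min_absorb2)
  have ac_meas [measurable]: "ac \<in> borel_measurable borel"
    unfolding ac_def by (intro borel_measurable_continuous_onI continuous_intros) auto
  have "(\<lambda>p. sph (fst p) (snd p)) \<in> borel_measurable borel"
    unfolding sph_eq_axis by (intro borel_measurable_continuous_onI continuous_intros)
  then have sph_meas: "(\<lambda>p. sph (fst p) (snd p)) \<in> borel_measurable (lborel \<Otimes>\<^sub>M lborel)"
    by (simp add: borel_prod[symmetric] measurable_lborel1 cong: measurable_cong_sets)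
  have "(\<lambda>x::((real^3) \<times> real) \<times> real. (snd (fst x), snd x))
      \<in> (borel \<Otimes>\<^sub>M lborel) \<Otimes>\<^sub>M lborel \<rightarrow>\<^sub>M lborel \<Otimes>\<^sub>M lborel"
    by measurable
  from measurable_compose[OF this sph_meas]
  have [measurable]: "(\<lambda>x::((real^3) \<times> real) \<times> real. sph (snd (fst x)) (snd x))
      \<in> borel_measurable ((borel \<Otimes>\<^sub>M lborel) \<Otimes>\<^sub>M lborel)"
    by simp
  have [measurable]: "(\<lambda>x::((real^3) \<times> real) \<times> real. norm (fst (fst x)))
      \<in> borel_measurable ((borel \<Otimes>\<^sub>M lborel) \<Otimes>\<^sub>M lborel)"
    by (rule measurable_compose[OF _ borel_measurable_norm]) measurable
  note assms [measurable]
  have "(\<lambda>w. LINT \<phi>|lborel. indicator {0..pi} \<phi> *\<^sub>R (LINT \<psi>|lborel. indicator {0..2*pi} \<psi> *\<^sub>R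
          (sin \<phi> * q0 (ac ((w \<bullet> sph \<phi> \<psi>) / norm w))))) \<in> borel_measurable borel"
    by measurable
  then show ?thesis unfolding angular_kernel_def set_lebesgue_integral_def ac[OF abs_inner_sph_div_norm_le_1] .
qed

lemma abs_angular_kernel_le:
  assumes "\<And>t. \<bar>q0 t\<bar> \<le> C"
  shows "\<bar>angular_kernel q0 w\<bar> \<le> C * (2*pi) * pi"
proof -
  have bound: "\<bar>sin \<phi> * q0 \<theta>\<bar> \<le> C" for \<phi> \<theta>
    using mult_mono[OF abs_sin_le_one assms[of \<theta>]] by (simp add: abs_mult)
  have "\<bar>set_lebesgue_integral lborel {0..2*pi} (\<lambda>\<psi>. sin \<phi> * q0 (arccos ((w \<bullet> sph \<phi> \<psi>) / norm w)))\<bar>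
      \<le> C * (2*pi - 0)" for \<phi>
    by (rule abs_set_integral_Icc_le) (use bound in auto)
  then have "\<bar>angular_kernel q0 w\<bar> \<le> (C * (2*pi)) * (pi - 0)"
    unfolding angular_kernel_def by (intro abs_set_integral_Icc_le) auto
  then show ?thesis by simp
qed

lemma nu_eq_shifted:
  assumes [measurable]: "q0 \<in> borel_measurable borel"
  shows "nu gam q0 v = (LINT w|lborel. (norm w powr gam * exp (- (norm (v + w))\<^sup>2 / 2)) * angular_kernel q0 w)"
proof -
  note angular_kernel_measurable[OF assms, measurable]
  let ?f = "\<lambda>u::real^3. (norm (v - u) powr gam * exp (- (norm u)\<^sup>2 / 2)) * angular_kernel q0 (u - v)"
  have "nu gam q0 v = integral\<^sup>L (distr lborel borel ((+) v)) ?f"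
    by (simp add: nu_eq_angular_kernel lborel_distr_plus)
  also have "\<dots> = (LINT w|lborel. ?f (v + w))"
    by (rule integral_distr) simp_all
  finally show ?thesis by (simp add: norm_minus_commute)
qed

lemma nu_integrand_bound:
  fixes v w :: "real^3"
  assumes "0 \<le> gam" "gam \<le> 1" "norm v \<le> R" "\<bar>K\<bar> \<le> C"
  shows "norm ((norm w powr gam * exp (- (norm (v + w))\<^sup>2 / 2)) * K)
    \<le> 4 * C * exp (R\<^sup>2 / 2) * exp (- (norm w)\<^sup>2 / 8)"
proof -
  have "norm w \<le> norm (v + w) + R" using norm_triangle_ineq4[of "v + w" v] assms(3) by simp
  then have "(norm w)\<^sup>2 \<le> (norm (v + w) + R)\<^sup>2" by (intro power_mono) auto
  also have "\<dots> \<le> 2 * (norm (v + w))\<^sup>2 + 2 * R\<^sup>2"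
    using zero_le_power2[of "norm (v + w) - R"] unfolding power2_diff power2_sum by linarith
  finally have gauss: "exp (- (norm (v + w))\<^sup>2 / 2) \<le> exp (R\<^sup>2 / 2) * exp (- (norm w)\<^sup>2 / 4)"
    unfolding exp_add[symmetric] by simp
  have "norm ((norm w powr gam * exp (- (norm (v + w))\<^sup>2 / 2)) * K)
      = norm w powr gam * exp (- (norm (v + w))\<^sup>2 / 2) * \<bar>K\<bar>"
    by (simp add: abs_mult)
  also have "\<dots> \<le> (1 + norm w) * (exp (R\<^sup>2 / 2) * exp (- (norm w)\<^sup>2 / 4)) * C"
    using powr_le_1_plus[of "norm w" gam] gauss assms by (intro mult_mono) auto
  also have "\<dots> = C * exp (R\<^sup>2 / 2) * ((1 + norm w) * exp (- (norm w)\<^sup>2 / 4))" by simp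
  also have "\<dots> \<le> C * exp (R\<^sup>2 / 2) * (4 * exp (- (norm w)\<^sup>2 / 8))"
    using assms(4) by (intro mult_left_mono one_plus_mult_exp_neg_sq_le) auto
  finally show ?thesis by simp
qed

lemma continuous_on_nu:
  assumes q0_meas: "q0 \<in> borel_measurable borel"
    and q0_bound: "\<And>\<theta>. 0 \<le> q0 \<theta> \<and> q0 \<theta> \<le> C * \<bar>cos \<theta>\<bar>"
    and "0 \<le> gam" "gam \<le> 1"
  shows "continuous_on UNIV (nu gam q0)"
proof -
  have "\<bar>q0 \<theta>\<bar> \<le> C" for \<theta>
    using q0_bound[of \<theta>] q0_bound[of 0] abs_cos_le_one[of \<theta>] mult_left_mono[of "\<bar>cos \<theta>\<bar>" 1 C] by simp
  then have K: "\<bar>angular_kernel q0 w\<bar> \<le> C * (2*pi) * pi" for w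
    by (rule abs_angular_kernel_le)
  note angular_kernel_measurable[OF q0_meas, measurable]
  define F where "F v w = (norm w powr gam * exp (- (norm (v + w))\<^sup>2 / 2)) * angular_kernel q0 w"
    for v w :: "real^3"
  have [measurable]: "F v \<in> borel_measurable lborel" for v unfolding F_def by measurable
  have "continuous (at v) (nu gam q0)" for v
  proof (rule continuous_at_sequentiallyI)
    fix u assume u: "u \<longlonglongrightarrow> v"
    then obtain R where R: "\<And>n. norm (u n) \<le> R"
      using convergent_imp_Bseq convergentI by (metis BseqE)
    let ?G = "\<lambda>w::real^3. 4 * (C * (2*pi) * pi) * exp (R\<^sup>2 / 2) * exp (- (norm w)\<^sup>2 / 8)"
    have "(\<lambda>n. integral\<^sup>L lborel (F (u n))) \<longlonglongrightarrow> integral\<^sup>L lborel (F v)"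
    proof (rule integral_dominated_convergence[where w = ?G])
      show "integrable lborel ?G"
        by (intro integrable_mult_right integrable_exp_neg_norm_sq_div_8)
      show "AE w in lborel. (\<lambda>n. F (u n) w) \<longlonglongrightarrow> F v w"
        unfolding F_def by (intro AE_I2 tendsto_intros u) auto
      show "AE w in lborel. norm (F (u n) w) \<le> ?G w" for n
        unfolding F_def using nu_integrand_bound[OF assms(3,4) R K] by (intro AE_I2) blast
    qed simp_all
    then show "(\<lambda>n. nu gam q0 (u n)) \<longlonglongrightarrow> nu gam q0 v"
      unfolding F_def nu_eq_shifted[OF q0_meas] .
  qed
  then show ?thesis by (intro continuous_at_imp_continuous_on) auto
qed

section \<open>Filters and integrals over varying intervals\<close>

lemma eventually_segment_in_open:
  fixes y v :: "'a::real_normed_vector"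
  assumes "open U" "\<forall>r\<in>{a..b}. y - r *\<^sub>R v \<in> U"
  shows "eventually (\<lambda>p. \<forall>r\<in>{a..b}. fst p - r *\<^sub>R snd p \<in> U) (nhds (y, v))"
proof -
  have "compact ((\<lambda>r. y - r *\<^sub>R v) ` {a..b})"
    by (intro compact_continuous_image continuous_intros) auto
  then obtain e where e: "e > 0" "(\<Union>z\<in>(\<lambda>r. y - r *\<^sub>R v) ` {a..b}. ball z e) \<subseteq> U"
    using compact_subset_open_imp_ball_epsilon_subset assms by blast
  define B where "B = \<bar>a\<bar> + \<bar>b\<bar>"
  have "open {p. norm (fst p - y) + B * norm (snd p - v) < e}"
    by (intro open_Collect_less continuous_intros)
  moreover have "(y, v) \<in> {p. norm (fst p - y) + B * norm (snd p - v) < e}" using e by simp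
  ultimately have "eventually (\<lambda>p. norm (fst p - y) + B * norm (snd p - v) < e) (nhds (y, v))"
    unfolding eventually_nhds by blast
  then show ?thesis
  proof eventually_elim
    case (elim p)
    show ?case
    proof
      fix r assume r: "r \<in> {a..b}"
      have "dist (y - r *\<^sub>R v) (fst p - r *\<^sub>R snd p) = norm ((y - fst p) + r *\<^sub>R (snd p - v))"
        by (simp add: dist_norm algebra_simps)
      also have "\<dots> \<le> norm (fst p - y) + \<bar>r\<bar> * norm (snd p - v)"
        using norm_triangle_ineq[of "y - fst p" "r *\<^sub>R (snd p - v)"] by (simp add: norm_minus_commute)
      also have "\<dots> \<le> norm (fst p - y) + B * norm (snd p - v)"
        using r unfolding B_def by (intro add_left_mono mult_right_mono) auto
      finally show "fst p - r *\<^sub>R snd p \<in> U" using elim e(2) r by force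
    qed
  qed
qed

lemma eventually_at_within_mem: "eventually (\<lambda>x. x \<in> S) (at a within S)"
  by (simp add: eventually_at_filter)

lemma eventually_at_within_if_nhds: "eventually P (nhds a) \<Longrightarrow> eventually P (at a within S)"
  by (auto simp: eventually_at_filter elim: eventually_mono)

lemma tendsto_at_within_if_eventually_Un:
  assumes "(f \<longlongrightarrow> l) (at a within A)" "(f \<longlongrightarrow> l) (at a within B)"
    and "eventually (\<lambda>x. x \<in> A \<union> B) (at a within S)"
  shows "(f \<longlongrightarrow> l) (at a within S)"
proof (rule topological_tendstoI)
  fix T assume T: "open T" "l \<in> T"
  have "eventually (\<lambda>x. f x \<in> T) (at a within A)" using assms(1) T by (rule topological_tendstoD)
  moreover have "eventually (\<lambda>x. f x \<in> T) (at a within B)" using assms(2) T by (rule topological_tendstoD)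
  ultimately show "eventually (\<lambda>x. f x \<in> T) (at a within S)"
    using assms(3) unfolding eventually_at_filter by eventually_elim blast
qed

lemma integral_Icc_eq_restrict:
  fixes g :: "real \<Rightarrow> real"
  assumes "0 \<le> \<tau>" "\<tau> \<le> B"
  shows "integral {0..\<tau>} g = integral {0..B} (\<lambda>s. if s \<in> {0<..<\<tau>} - {c} then g s else 0)"
proof -
  have "integral {0..B} (\<lambda>s. if s \<in> {0<..<\<tau>} - {c} then g s else 0) = integral (({0<..<\<tau>} - {c}) \<inter> {0..B}) g"
    by (rule integral_restrict_Int)
  also have "({0<..<\<tau>} - {c}) \<inter> {0..B} = {0<..<\<tau>} - {c}" using assms by auto
  also have "integral ({0<..<\<tau>} - {c}) g = integral {0..\<tau>} g"
  proof (rule integral_spike_set)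
    show "negligible {x \<in> ({0<..<\<tau>} - {c}) - {0..\<tau>}. g x \<noteq> 0}" by (rule negligible_subset[of "{}"]) auto
    show "negligible {x \<in> {0..\<tau>} - ({0<..<\<tau>} - {c}). g x \<noteq> 0}"
      by (rule negligible_subset[of "{0, \<tau>, c}"]) auto
  qed
  finally show ?thesis by simp
qed

lemma integrable_restrict_if_continuous_bounded:
  fixes g :: "real \<Rightarrow> real"
  assumes "0 \<le> \<tau>" "\<tau> \<le> B" and cont: "continuous_on ({0<..<\<tau>} - {c}) g"
    and bound: "\<And>s. s \<in> {0<..<\<tau>} - {c} \<Longrightarrow> \<bar>g s\<bar> \<le> C"
  shows "(\<lambda>s. if s \<in> {0<..<\<tau>} - {c} then g s else 0) integrable_on {0..B}"
proof -
  let ?U = "{0<..<\<tau>} - {c}"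
  have U: "open ?U" "bounded ?U" by (auto intro: bounded_subset[of "{0..\<tau>}"])
  have "g integrable_on ?U"
  proof (rule measurable_bounded_by_integrable_imp_integrable_real)
    show "?U \<in> sets lebesgue" using U by simp
    show "g \<in> borel_measurable (lebesgue_on ?U)"
      using cont U by (intro continuous_imp_measurable_on_sets_lebesgue) auto
    show "(\<lambda>_. C) integrable_on ?U" using U by (intro integrable_on_const bounded_set_imp_lmeasurable) auto
  qed (rule bound)
  moreover have "?U \<inter> {0..B} = ?U" using assms by auto
  ultimately have "g integrable_on (?U \<inter> {0..B})" by simp
  then show ?thesis by (simp only: integrable_restrict_Int)
qed

lemma tendsto_integral_varying_interval:
  fixes g :: "nat \<Rightarrow> real \<Rightarrow> real" and g0 :: "real \<Rightarrow> real"
  assumes T: "T \<longlonglongrightarrow> \<tau>" "\<And>k. 0 \<le> T k"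
    and cont: "\<And>k. continuous_on {0<..<T k} (g k)"
    and bound: "\<And>k s. s \<in> {0<..<T k} \<Longrightarrow> \<bar>g k s\<bar> \<le> C"
    and conv: "\<And>s. 0 < s \<Longrightarrow> s < \<tau> \<Longrightarrow> (\<lambda>k. g k s) \<longlonglongrightarrow> g0 s"
  shows "(\<lambda>k. integral {0..T k} (g k)) \<longlonglongrightarrow> integral {0..\<tau>} g0"
proof -
  have \<tau>: "0 \<le> \<tau>" using T by (intro LIMSEQ_le_const) auto
  obtain B0 where "0 < B0" "\<forall>k. norm (T k) \<le> B0"
    using convergent_imp_Bseq[OF convergentI[OF T(1)]] by (rule BseqE)
  then have B0: "norm (T k) \<le> B0" for k by blast
  define B where "B = max B0 \<tau>"
  have B: "T k \<le> B" "\<tau> \<le> B" for k using B0[of k] unfolding B_def by auto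
  define f where "f k s = (if s \<in> {0<..<T k} - {\<tau>} then g k s else 0)" for k s
  define f0 where "f0 s = (if s \<in> {0<..<\<tau>} - {\<tau>} then g0 s else 0)" for s
  have "(\<lambda>k. integral {0..B} (f k)) \<longlonglongrightarrow> integral {0..B} f0"
  proof (rule dominated_convergence(2))
    show "f k integrable_on {0..B}" for k
      unfolding f_def using T(2) B(1) bound
      by (intro integrable_restrict_if_continuous_bounded continuous_on_subset[OF cont]) auto
    show "norm (f k s) \<le> max C 0" if "s \<in> {0..B}" for k s
      using bound[of s k] by (auto simp: f_def)
    show "(\<lambda>_. max C 0) integrable_on {0..B}" by (rule integrable_on_const) simp
    show "(\<lambda>k. f k s) \<longlonglongrightarrow> f0 s" if "s \<in> {0..B}" for s
    proof -
      consider "0 < s" "s < \<tau>" | "s \<le> 0 \<or> s = \<tau>" | "\<tau> < s" by linarith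
      then show ?thesis
      proof cases
        case 1
        have "eventually (\<lambda>k. s < T k) sequentially" using T(1) 1 by (intro order_tendstoD(1))
        then have "eventually (\<lambda>k. g k s = f k s) sequentially"
          by eventually_elim (use 1 in \<open>auto simp: f_def\<close>)
        then show ?thesis using conv[OF 1] 1 Lim_transform_eventually by (fastforce simp: f0_def)
      next
        case 2
        then show ?thesis by (auto simp: f_def f0_def)
      next
        case 3
        have "eventually (\<lambda>k. T k < s) sequentially" using T(1) 3 by (intro order_tendstoD(2))
        then have "eventually (\<lambda>k. f k s = 0) sequentially" by eventually_elim (auto simp: f_def)
        then show ?thesis using 3 by (simp add: f0_def tendsto_eventually)
      qed
    qed
  qed
  moreover have "integral {0..T k} (g k) = integral {0..B} (f k)" for k
    unfolding f_def using T(2) B(1) by (rule integral_Icc_eq_restrict)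
  moreover have "integral {0..\<tau>} g0 = integral {0..B} f0"
    unfolding f0_def using \<tau> B(2) by (rule integral_Icc_eq_restrict)
  ultimately show ?thesis by simp
qed

section \<open>Strictly convex domains and backward exit times\<close>

locale strictly_convex_domain =
  fixes \<xi> :: "real^3 \<Rightarrow> real" and c :: real
  assumes smooth: "smooth3 \<xi>"
    and bounded_dom: "bounded (dom \<xi>)"
    and grad_nonzero: "\<forall>x. \<xi> x = 0 \<longrightarrow> grad \<xi> x \<noteq> 0"
    and c_pos: "c > 0"
    and strictly_convex: "\<forall>x \<zeta>. \<xi> x \<le> 0 \<longrightarrow> dd \<xi> [\<zeta>, \<zeta>] x \<ge> c * (norm \<zeta>)\<^sup>2"
begin

abbreviation \<Omega> :: "(real^3) set" where "\<Omega> \<equiv> dom \<xi>"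

definition D\<xi> :: "real^3 \<Rightarrow> real^3 \<Rightarrow> real" where "D\<xi> x = frechet_derivative \<xi> (at x)"

lemma has_derivative_\<xi>: "(\<xi> has_derivative D\<xi> x) (at x)"
proof -
  have "dd \<xi> [] differentiable (at x)" using smooth unfolding smooth3_def by blast
  then show ?thesis unfolding D\<xi>_def by (simp add: frechet_derivative_works)
qed

lemma continuous_on_\<xi>: "continuous_on S \<xi>"
  using has_derivative_\<xi> by (meson continuous_at_imp_continuous_on differentiableI differentiable_imp_continuous_within)

lemma linear_D\<xi>: "linear (D\<xi> x)"
  using has_derivative_\<xi> by (rule has_derivative_linear)

lemma D\<xi>_minus: "D\<xi> x (- v) = - D\<xi> x v"
  using linear_D\<xi> by (rule linear_neg)

lemma dd_single: "dd \<xi> [v] = (\<lambda>x. D\<xi> x v)"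
  by (simp add: D\<xi>_def fun_eq_iff)

lemma has_derivative_D\<xi>:
  "((\<lambda>x. D\<xi> x v) has_derivative frechet_derivative (dd \<xi> [v]) (at x)) (at x)"
proof -
  have "dd \<xi> [v] differentiable (at x)" using smooth unfolding smooth3_def by blast
  then show ?thesis by (simp add: frechet_derivative_works[symmetric] dd_single[symmetric])
qed

lemma grad_eq_D\<xi>: "grad \<xi> x = (\<chi> i. D\<xi> x (axis i 1))"
  unfolding grad_def D\<xi>_def by simp

lemma D\<xi>_eq_inner_grad: "D\<xi> x v = grad \<xi> x \<bullet> v"
proof -
  have "D\<xi> x v = D\<xi> x (\<Sum>i\<in>UNIV. (v$i) *s axis i 1)" by (simp add: basis_expansion)
  also have "\<dots> = (\<Sum>i\<in>UNIV. v$i * D\<xi> x (axis i 1))"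
    using linear_D\<xi> by (simp add: linear_sum linear_scale scalar_mult_eq_scaleR)
  also have "\<dots> = grad \<xi> x \<bullet> v" by (simp add: grad_eq_D\<xi> inner_vec_def mult.commute)
  finally show ?thesis .
qed

lemma continuous_on_D\<xi>: "continuous_on S (\<lambda>p. D\<xi> (fst p) (snd p))"
proof -
  have "continuous_on UNIV (\<lambda>x. D\<xi> x v)" for v
    using has_derivative_D\<xi> by (meson continuous_at_imp_continuous_on differentiableI differentiable_imp_continuous_within)
  then have grad: "continuous_on UNIV (grad \<xi>)"
    unfolding grad_eq_D\<xi> by (intro continuous_on_vec_lambda)
  show ?thesis
    unfolding D\<xi>_eq_inner_grad by (intro continuous_intros continuous_on_compose2[OF grad]) auto
qed

lemma open_\<Omega>: "open \<Omega>"
  unfolding dom_def by (rule open_Collect_less) (auto intro: continuous_on_\<xi> continuous_intros)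

lemma \<xi>_le_0_if_closure: "x \<in> closure \<Omega> \<Longrightarrow> \<xi> x \<le> 0"
proof -
  have "closed {x. \<xi> x \<le> 0}" by (rule closed_Collect_le) (auto intro: continuous_on_\<xi> continuous_intros)
  moreover have "\<Omega> \<subseteq> {x. \<xi> x \<le> 0}" by (auto simp: dom_def)
  ultimately show "x \<in> closure \<Omega> \<Longrightarrow> \<xi> x \<le> 0" using closure_minimal by blast
qed

lemma frontier_\<Omega>: "frontier \<Omega> = closure \<Omega> - \<Omega>"
  using open_\<Omega> by (simp add: frontier_def interior_open)

lemma \<xi>_frontier: "x \<in> frontier \<Omega> \<Longrightarrow> \<xi> x = 0"
  using \<xi>_le_0_if_closure unfolding frontier_\<Omega> by (force simp: dom_def)

lemma normal_inner_sign:
  assumes "x \<in> frontier \<Omega>"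
  shows "(normal \<xi> x \<bullet> v < 0 \<longleftrightarrow> D\<xi> x v < 0) \<and> (normal \<xi> x \<bullet> v = 0 \<longleftrightarrow> D\<xi> x v = 0)"
proof -
  have "norm (grad \<xi> x) > 0" using grad_nonzero \<xi>_frontier[OF assms] by simp
  moreover have "normal \<xi> x \<bullet> v = D\<xi> x v / norm (grad \<xi> x)"
    unfolding normal_def D\<xi>_eq_inner_grad by simp
  ultimately show ?thesis by (simp add: divide_less_0_iff)
qed

lemma has_real_derivative_\<xi>_line:
  "((\<lambda>s. \<xi> (y + s *\<^sub>R v)) has_real_derivative D\<xi> (y + s *\<^sub>R v) v) (at s)"
proof -
  have "((\<lambda>s. y + s *\<^sub>R v) has_derivative (\<lambda>h. h *\<^sub>R v)) (at s)"
    by (auto intro!: derivative_eq_intros)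
  from has_derivative_compose[OF this has_derivative_\<xi>]
  have "((\<lambda>s. \<xi> (y + s *\<^sub>R v)) has_derivative (\<lambda>h. D\<xi> (y + s *\<^sub>R v) (h *\<^sub>R v))) (at s)" .
  moreover have "(\<lambda>h. D\<xi> (y + s *\<^sub>R v) (h *\<^sub>R v)) = (*) (D\<xi> (y + s *\<^sub>R v) v)"
    using linear_D\<xi> by (simp add: linear_scale fun_eq_iff mult.commute)
  ultimately show ?thesis unfolding has_field_derivative_def by simp
qed

lemma has_real_derivative_\<xi>_line_backward:
  "((\<lambda>s. \<xi> (y - s *\<^sub>R v)) has_real_derivative - D\<xi> (y - s *\<^sub>R v) v) (at s)"
  using has_real_derivative_\<xi>_line[of y "- v" s] by (simp add: D\<xi>_minus)

lemma has_real_derivative_D\<xi>_line: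
  "((\<lambda>s. D\<xi> (y + s *\<^sub>R v) v) has_real_derivative dd \<xi> [v, v] (y + s *\<^sub>R v)) (at s)"
proof -
  let ?D2 = "frechet_derivative (dd \<xi> [v]) (at (y + s *\<^sub>R v))"
  have "((\<lambda>s. y + s *\<^sub>R v) has_derivative (\<lambda>h. h *\<^sub>R v)) (at s)"
    by (auto intro!: derivative_eq_intros)
  from has_derivative_compose[OF this has_derivative_D\<xi>]
  have "((\<lambda>s. D\<xi> (y + s *\<^sub>R v) v) has_derivative (\<lambda>h. ?D2 (h *\<^sub>R v))) (at s)" .
  moreover have "linear ?D2" using has_derivative_D\<xi> by (rule has_derivative_linear)
  then have "(\<lambda>h. ?D2 (h *\<^sub>R v)) = (*) (dd \<xi> [v, v] (y + s *\<^sub>R v))"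
    by (simp add: linear_scale fun_eq_iff mult.commute)
  ultimately show ?thesis unfolding has_field_derivative_def by simp
qed

text \<open>Transversality: by strict convexity \<open>s \<mapsto> D\<xi> (y + s v) v\<close> is strictly increasing along a
  chord in \<open>closure \<Omega>\<close>, so if it started \<open>\<ge> 0\<close> at the boundary point \<open>y\<close>, then \<open>\<xi>\<close> would become
  positive along the chord.\<close>
lemma D\<xi>_neg_if_chord:
  assumes y: "\<xi> y = 0" and v: "v \<noteq> 0" and \<tau>: "\<tau> > 0"
    and chord: "\<forall>s\<in>{0..\<tau>}. y + s *\<^sub>R v \<in> closure \<Omega>"
  shows "D\<xi> y v < 0"
proof (rule ccontr)
  assume "\<not> D\<xi> y v < 0"
  then have start: "D\<xi> (y + 0 *\<^sub>R v) v \<ge> 0" by simp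
  have second: "dd \<xi> [v, v] (y + s *\<^sub>R v) > 0" if "s \<in> {0..\<tau>}" for s
  proof -
    have "\<xi> (y + s *\<^sub>R v) \<le> 0" using chord that \<xi>_le_0_if_closure by blast
    then have "dd \<xi> [v, v] (y + s *\<^sub>R v) \<ge> c * (norm v)\<^sup>2" using strictly_convex by blast
    moreover have "c * (norm v)\<^sup>2 > 0" using c_pos v by simp
    ultimately show ?thesis by linarith
  qed
  have first: "D\<xi> (y + s *\<^sub>R v) v > 0" if "0 < s" "s \<le> \<tau>" for s
  proof -
    have "\<exists>z. 0 < z \<and> z < s \<and>
        D\<xi> (y + s *\<^sub>R v) v - D\<xi> (y + 0 *\<^sub>R v) v = (s - 0) * dd \<xi> [v, v] (y + z *\<^sub>R v)"
      by (rule MVT2) (use that has_real_derivative_D\<xi>_line in auto)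
    then obtain z where z: "0 < z" "z < s"
      "D\<xi> (y + s *\<^sub>R v) v - D\<xi> (y + 0 *\<^sub>R v) v = (s - 0) * dd \<xi> [v, v] (y + z *\<^sub>R v)"
      by blast
    moreover have "(s - 0) * dd \<xi> [v, v] (y + z *\<^sub>R v) > 0"
      using second[of z] z that by (intro mult_pos_pos) auto
    ultimately show ?thesis using start by linarith
  qed
  obtain z where z: "0 < z" "z < \<tau>"
    "\<xi> (y + \<tau> *\<^sub>R v) - \<xi> (y + 0 *\<^sub>R v) = (\<tau> - 0) * D\<xi> (y + z *\<^sub>R v) v"
    using MVT2[of 0 \<tau> "\<lambda>s. \<xi> (y + s *\<^sub>R v)" "\<lambda>s. D\<xi> (y + s *\<^sub>R v) v"] \<tau> has_real_derivative_\<xi>_line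
    by blast
  moreover have "\<xi> (y + \<tau> *\<^sub>R v) \<le> 0" using chord \<tau> \<xi>_le_0_if_closure by auto
  moreover have "(\<tau> - 0) * D\<xi> (y + z *\<^sub>R v) v > 0"
    using first[of z] z by (intro mult_pos_pos) auto
  ultimately show False using y by simp
qed

lemma chord_interior_in_\<Omega>:
  assumes v: "v \<noteq> 0" and "a < s" "s < b" and chord: "\<forall>r\<in>{a..b}. y + r *\<^sub>R v \<in> closure \<Omega>"
  shows "y + s *\<^sub>R v \<in> \<Omega>"
proof (rule ccontr)
  let ?p = "y + s *\<^sub>R v"
  assume "?p \<notin> \<Omega>"
  then have p: "\<xi> ?p = 0" using chord assms(2,3) by (intro \<xi>_frontier) (auto simp: frontier_\<Omega>)
  have "D\<xi> ?p v < 0"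
  proof (rule D\<xi>_neg_if_chord[OF p v])
    show "\<forall>r\<in>{0..b - s}. ?p + r *\<^sub>R v \<in> closure \<Omega>"
    proof
      fix r assume "r \<in> {0..b - s}"
      then have "s + r \<in> {a..b}" using assms by auto
      from chord[rule_format, OF this] show "?p + r *\<^sub>R v \<in> closure \<Omega>" by (simp add: algebra_simps)
    qed
  qed (use assms in simp)
  moreover have "D\<xi> ?p (- v) < 0"
  proof (rule D\<xi>_neg_if_chord[OF p])
    show "\<forall>r\<in>{0..s - a}. ?p + r *\<^sub>R - v \<in> closure \<Omega>"
    proof
      fix r assume "r \<in> {0..s - a}"
      then have "s - r \<in> {a..b}" using assms by auto
      from chord[rule_format, OF this] show "?p + r *\<^sub>R - v \<in> closure \<Omega>" by (simp add: algebra_simps)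
    qed
  qed (use assms in simp_all)
  ultimately show False by (simp add: D\<xi>_minus)
qed

definition nongrazing :: "real^3 \<Rightarrow> real^3 \<Rightarrow> bool" where
  "nongrazing y v \<longleftrightarrow> y \<in> closure \<Omega> \<and> (y \<in> frontier \<Omega> \<longrightarrow> D\<xi> y v \<noteq> 0)"

lemma nongrazing_iff: "nongrazing y v \<longleftrightarrow> (y, v) \<in> (closure \<Omega> \<times> UNIV) - gamma_zero \<xi>"
  unfolding nongrazing_def gamma_zero_def using normal_inner_sign by auto

lemma nongrazing_zero_iff: "nongrazing y 0 \<longleftrightarrow> y \<in> \<Omega>"
  unfolding nongrazing_def frontier_\<Omega> using closure_subset by (auto simp: D\<xi>_eq_inner_grad)

definition back_times :: "real^3 \<Rightarrow> real^3 \<Rightarrow> real set" where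
  "back_times y v = {s. 0 \<le> s \<and> (\<forall>r\<in>{0..s}. y - r *\<^sub>R v \<in> closure \<Omega>)}"

text \<open>For \<open>v = 0\<close> the set of back times is
  unbounded and the supremum is junk; it is only used for \<open>v \<noteq> 0\<close>.\<close>
definition exit_time :: "real^3 \<Rightarrow> real^3 \<Rightarrow> real" where
  "exit_time y v = Sup (back_times y v)"

lemma bdd_above_back_times:
  assumes "v \<noteq> 0"
  shows "bdd_above (back_times y v)"
proof -
  obtain B where B: "\<And>x. x \<in> closure \<Omega> \<Longrightarrow> norm x \<le> B"
    using bounded_closure[OF bounded_dom] by (auto simp: bounded_iff)
  have "s \<le> (norm y + B) / norm v" if "s \<in> back_times y v" for s
  proof -
    have s: "0 \<le> s" "y - s *\<^sub>R v \<in> closure \<Omega>" using that by (auto simp: back_times_def)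
    have "norm (s *\<^sub>R v) \<le> norm y + norm (y - s *\<^sub>R v)"
      using norm_triangle_ineq4[of y "y - s *\<^sub>R v"] by simp
    then have "s * norm v \<le> norm y + B" using s B[OF s(2)] by simp
    then show ?thesis using assms by (simp add: field_simps)
  qed
  then show ?thesis by (rule bdd_aboveI)
qed

lemma zero_in_back_times: "y \<in> closure \<Omega> \<Longrightarrow> 0 \<in> back_times y v"
  by (simp add: back_times_def)

lemma exit_time_nonneg: "y \<in> closure \<Omega> \<Longrightarrow> v \<noteq> 0 \<Longrightarrow> 0 \<le> exit_time y v"
  unfolding exit_time_def by (rule cSup_upper[OF zero_in_back_times bdd_above_back_times])

lemma le_exit_time: "v \<noteq> 0 \<Longrightarrow> s \<in> back_times y v \<Longrightarrow> s \<le> exit_time y v"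
  unfolding exit_time_def by (rule cSup_upper[OF _ bdd_above_back_times])

lemma back_times_forward:
  assumes "t \<in> back_times x v" "s \<in> {0..t}"
  shows "(x - t *\<^sub>R v) + s *\<^sub>R v \<in> closure \<Omega>"
proof -
  have "t - s \<in> {0..t}" using assms(2) by auto
  then have "x - (t - s) *\<^sub>R v \<in> closure \<Omega>" using assms(1) unfolding back_times_def by blast
  then show ?thesis by (simp add: algebra_simps)
qed

lemma backward_in_closure:
  assumes y: "y \<in> closure \<Omega>" and v: "v \<noteq> 0" and r: "0 \<le> r" "r \<le> exit_time y v"
  shows "y - r *\<^sub>R v \<in> closure \<Omega>"
proof -
  have before: "y - r *\<^sub>R v \<in> closure \<Omega>" if r0: "0 \<le> r" and r1: "r < exit_time y v" for r
  proof -
    obtain s where "s \<in> back_times y v" "r < s"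
      using r1 unfolding exit_time_def by (metis less_cSupE zero_in_back_times[OF y] empty_iff)
    then show ?thesis using r0 by (auto simp: back_times_def)
  qed
  consider "r < exit_time y v" | "r = exit_time y v" "exit_time y v = 0" | "r = exit_time y v" "0 < exit_time y v"
    using r exit_time_nonneg[OF y v] by linarith
  then show ?thesis
  proof cases
    case 3
    have "closed ((\<lambda>s. y - s *\<^sub>R v) -` closure \<Omega>)"
      by (rule closed_vimage) (auto intro!: continuous_intros)
    moreover have "{0..<exit_time y v} \<subseteq> (\<lambda>s. y - s *\<^sub>R v) -` closure \<Omega>" using before by auto
    ultimately have "closure {0..<exit_time y v} \<subseteq> (\<lambda>s. y - s *\<^sub>R v) -` closure \<Omega>"
      by (intro closure_minimal)
    then have "{0..exit_time y v} \<subseteq> (\<lambda>s. y - s *\<^sub>R v) -` closure \<Omega>"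
      using 3 by (simp add: closure_atLeastLessThan)
    then show ?thesis using 3 by (simp add: subset_iff)
  qed (use before r y in auto)
qed

lemma exit_point_frontier:
  assumes y: "y \<in> closure \<Omega>" and v: "v \<noteq> 0"
  shows "y - exit_time y v *\<^sub>R v \<in> frontier \<Omega>"
proof (rule ccontr)
  let ?t = "exit_time y v"
  assume "y - ?t *\<^sub>R v \<notin> frontier \<Omega>"
  then have "y - ?t *\<^sub>R v \<in> \<Omega>"
    using backward_in_closure[OF y v] exit_time_nonneg[OF y v] by (simp add: frontier_\<Omega>)
  then obtain e where e: "e > 0" "ball (y - ?t *\<^sub>R v) e \<subseteq> \<Omega>"
    using open_\<Omega> by (meson openE)
  define s where "s = ?t + e / (2 * norm v)"
  have nv: "norm v > 0" using v by simp
  have "s \<in> back_times y v"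
    unfolding back_times_def
  proof safe
    show "0 \<le> s" unfolding s_def using exit_time_nonneg[OF y v] e nv by simp
    fix r assume r: "r \<in> {0..s}"
    show "y - r *\<^sub>R v \<in> closure \<Omega>"
    proof (cases "r \<le> ?t")
      case True then show ?thesis using backward_in_closure[OF y v] r by auto
    next
      case False
      have "dist (y - ?t *\<^sub>R v) (y - r *\<^sub>R v) = (r - ?t) * norm v"
        using False by (simp add: dist_norm algebra_simps flip: scaleR_diff_left)
      also have "\<dots> \<le> (e / (2 * norm v)) * norm v"
        using r False nv unfolding s_def by (intro mult_right_mono) auto
      also have "\<dots> < e" using nv e by simp
      finally have "y - r *\<^sub>R v \<in> ball (y - ?t *\<^sub>R v) e" by simp
      then show ?thesis using e(2) closure_subset by blast
    qed
  qed
  then have "s \<le> ?t" by (rule le_exit_time[OF v])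
  moreover have "e / (2 * norm v) > 0" using e nv by simp
  ultimately show False unfolding s_def by linarith
qed

lemma before_exit_time_in_\<Omega>:
  assumes "y \<in> closure \<Omega>" "v \<noteq> 0" "0 < r" "r < exit_time y v"
  shows "y - r *\<^sub>R v \<in> \<Omega>"
  using chord_interior_in_\<Omega>[of "- v" 0 r "exit_time y v" y] backward_in_closure assms by simp

lemma exit_time_pos_iff:
  assumes y: "y \<in> frontier \<Omega>" and v: "v \<noteq> 0"
  shows "0 < exit_time y v \<longleftrightarrow> 0 < D\<xi> y v"
proof
  have y_cl: "y \<in> closure \<Omega>" using y by (simp add: frontier_\<Omega>)
  assume "0 < exit_time y v"
  then have "D\<xi> y (- v) < 0"
    using D\<xi>_neg_if_chord[OF \<xi>_frontier[OF y], where v = "- v" and \<tau> = "exit_time y v"] backward_in_closure[OF y_cl v] v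
    by simp
  then show "0 < D\<xi> y v" by (simp add: D\<xi>_minus)
next
  assume "0 < D\<xi> y v"
  then obtain e where e: "e > 0" "\<And>h. 0 < h \<Longrightarrow> h < e \<Longrightarrow> \<xi> (y - (0 + h) *\<^sub>R v) < \<xi> (y - 0 *\<^sub>R v)"
    using DERIV_neg_dec_right[OF has_real_derivative_\<xi>_line_backward[of y v 0]] by auto
  have "e / 2 \<in> back_times y v"
    unfolding back_times_def
  proof safe
    fix r assume r: "r \<in> {0..e/2}"
    show "y - r *\<^sub>R v \<in> closure \<Omega>"
    proof (cases "r = 0")
      case False
      then have "\<xi> (y - r *\<^sub>R v) < 0" using e(1) e(2)[of r] r \<xi>_frontier[OF y] by simp
      then have "y - r *\<^sub>R v \<in> \<Omega>" by (simp add: dom_def)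
      then show ?thesis using closure_subset by blast
    qed (use y in \<open>simp add: frontier_\<Omega>\<close>)
  qed (use e in simp)
  then have "e / 2 \<le> exit_time y v" by (rule le_exit_time[OF v])
  then show "0 < exit_time y v" using e(1) by simp
qed

lemma D\<xi>_exit_point_neg:
  assumes ng: "nongrazing y v" and v: "v \<noteq> 0"
  shows "D\<xi> (y - exit_time y v *\<^sub>R v) v < 0"
proof -
  have y: "y \<in> closure \<Omega>" using ng by (simp add: nongrazing_def)
  let ?x = "y - exit_time y v *\<^sub>R v"
  show ?thesis
  proof (cases "exit_time y v = 0")
    case False
    then have "0 < exit_time y v" using exit_time_nonneg[OF y v] by simp
    moreover have "\<forall>s\<in>{0..exit_time y v}. ?x + s *\<^sub>R v \<in> closure \<Omega>"
    proof
      fix s assume "s \<in> {0..exit_time y v}"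
      then have "y - (exit_time y v - s) *\<^sub>R v \<in> closure \<Omega>" by (intro backward_in_closure[OF y v]) auto
      then show "?x + s *\<^sub>R v \<in> closure \<Omega>" by (simp add: algebra_simps)
    qed
    ultimately show ?thesis
      using D\<xi>_neg_if_chord[OF \<xi>_frontier[OF exit_point_frontier[OF y v]] v] by blast
  next
    case True
    then have yf: "y \<in> frontier \<Omega>" using exit_point_frontier[OF y v] by simp
    then have "\<not> 0 < D\<xi> y v" using True exit_time_pos_iff[OF yf v] by simp
    moreover have "D\<xi> y v \<noteq> 0" using ng yf by (simp add: nongrazing_def)
    ultimately show ?thesis using True by simp
  qed
qed

lemma \<xi>_pos_after_exit_time:
  assumes "nongrazing y v" "v \<noteq> 0"
  obtains e where "e > 0" "\<And>s. exit_time y v < s \<Longrightarrow> s < exit_time y v + e \<Longrightarrow> \<xi> (y - s *\<^sub>R v) > 0"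
proof -
  let ?t = "exit_time y v"
  have y: "y \<in> closure \<Omega>" using assms by (simp add: nongrazing_def)
  obtain d where d: "d > 0" "\<And>h. 0 < h \<Longrightarrow> h < d \<Longrightarrow> \<xi> (y - ?t *\<^sub>R v) < \<xi> (y - (?t + h) *\<^sub>R v)"
    using DERIV_pos_inc_right[OF has_real_derivative_\<xi>_line_backward[of y v ?t]]
      D\<xi>_exit_point_neg[OF assms] by auto
  moreover have "\<xi> (y - ?t *\<^sub>R v) = 0" using \<xi>_frontier[OF exit_point_frontier[OF y assms(2)]] .
  ultimately show thesis
    using that[of d] d(2)[of "_ - ?t"] by simp
qed

lemma eventually_\<xi>_decreasing_backward:
  assumes "D\<xi> y v > 0"
  obtains \<delta> where "\<delta> > 0"
    "eventually (\<lambda>p. \<forall>r\<in>{0<..\<delta>}. \<xi> (fst p - r *\<^sub>R snd p) < \<xi> (fst p)) (nhds (y, v))"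
proof -
  let ?\<Phi> = "\<lambda>q::((real^3) \<times> (real^3)) \<times> real. D\<xi> (fst (fst q) - snd q *\<^sub>R snd (fst q)) (snd (fst q))"
  have "continuous_on UNIV (\<lambda>q::((real^3) \<times> (real^3)) \<times> real. (fst (fst q) - snd q *\<^sub>R snd (fst q), snd (fst q)))"
    by (intro continuous_intros)
  from continuous_on_compose[OF this continuous_on_D\<xi>]
  have "open {q. 0 < ?\<Phi> q}" by (intro open_Collect_less continuous_on_const) (simp add: o_def)
  moreover have "((y, v), 0) \<in> {q. 0 < ?\<Phi> q}" using assms by simp
  ultimately have "eventually (\<lambda>q. 0 < ?\<Phi> q) (nhds ((y, v), 0))"
    unfolding eventually_nhds by blast
  then obtain P Q where P: "eventually P (nhds (y, v))" and Q: "eventually Q (nhds 0)"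
    and PQ: "\<And>p r. P p \<Longrightarrow> Q r \<Longrightarrow> 0 < ?\<Phi> (p, r)"
    unfolding nhds_prod eventually_prod_filter by blast
  obtain \<delta> where \<delta>: "\<delta> > 0" "\<And>r. dist r 0 \<le> \<delta> \<Longrightarrow> Q r"
    using Q unfolding eventually_nhds_metric_le by blast
  show thesis
  proof (rule that[OF \<delta>(1)])
    show "eventually (\<lambda>p. \<forall>r\<in>{0<..\<delta>}. \<xi> (fst p - r *\<^sub>R snd p) < \<xi> (fst p)) (nhds (y, v))"
      using P
    proof eventually_elim
      case (elim p)
      show ?case
      proof
        fix r assume r: "r \<in> {0<..\<delta>}"
        have "\<exists>z. 0 < z \<and> z < r \<and> \<xi> (fst p - r *\<^sub>R snd p) - \<xi> (fst p - 0 *\<^sub>R snd p)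
            = (r - 0) * - D\<xi> (fst p - z *\<^sub>R snd p) (snd p)"
          by (rule MVT2) (use r has_real_derivative_\<xi>_line_backward in auto)
        then obtain z where z: "0 < z" "z < r"
          "\<xi> (fst p - r *\<^sub>R snd p) - \<xi> (fst p) = r * - D\<xi> (fst p - z *\<^sub>R snd p) (snd p)"
          by auto
        have "0 < r * D\<xi> (fst p - z *\<^sub>R snd p) (snd p)"
          using PQ[OF elim, of z] \<delta>(2)[of z] z r by (intro mult_pos_pos) auto
        then show "\<xi> (fst p - r *\<^sub>R snd p) < \<xi> (fst p)" using z(3) by simp
      qed
    qed
  qed
qed

definition nongrazing_moving :: "((real^3) \<times> (real^3)) set" where
  "nongrazing_moving = {(y, v). nongrazing y v \<and> v \<noteq> 0}"

lemma eventually_in_back_times: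
  assumes yv: "(y, v) \<in> nongrazing_moving" and s: "0 \<le> s" "s < exit_time y v"
  shows "eventually (\<lambda>p. s \<in> back_times (fst p) (snd p)) (at (y, v) within nongrazing_moving)"
proof -
  have y: "y \<in> closure \<Omega>" and v: "v \<noteq> 0" using yv by (auto simp: nongrazing_moving_def nongrazing_def)
  have inner: "y - r *\<^sub>R v \<in> \<Omega>" if "0 < r" "r \<le> s" for r
    using before_exit_time_in_\<Omega>[OF y v] that s by simp
  have base: "eventually (\<lambda>p. fst p \<in> closure \<Omega>) (at (y, v) within nongrazing_moving)"
    using eventually_at_within_mem[of nongrazing_moving "(y, v)"]
    by eventually_elim (auto simp: nongrazing_moving_def nongrazing_def)
  consider "y \<in> \<Omega>" | "y \<in> frontier \<Omega>" using y frontier_\<Omega> by blast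
  then have "eventually (\<lambda>p. \<forall>r\<in>{0..s}. fst p - r *\<^sub>R snd p \<in> closure \<Omega>) (at (y, v) within nongrazing_moving)"
  proof cases
    case 1
    then have "\<forall>r\<in>{0..s}. y - r *\<^sub>R v \<in> \<Omega>" using inner by (auto simp: order_le_less)
    from eventually_at_within_if_nhds[OF eventually_segment_in_open[OF open_\<Omega> this]]
    show ?thesis by eventually_elim (use closure_subset in blast)
  next
    case 2
    have "0 < D\<xi> y v" using exit_time_pos_iff[OF 2 v] s by simp
    then obtain \<delta> where \<delta>: "\<delta> > 0"
      and decr: "eventually (\<lambda>p. \<forall>r\<in>{0<..\<delta>}. \<xi> (fst p - r *\<^sub>R snd p) < \<xi> (fst p)) (nhds (y, v))"
      by (rule eventually_\<xi>_decreasing_backward)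
    have "\<forall>r\<in>{\<delta>..s}. y - r *\<^sub>R v \<in> \<Omega>" using inner \<delta> by auto
    from eventually_segment_in_open[OF open_\<Omega> this]
    have far: "eventually (\<lambda>p. \<forall>r\<in>{\<delta>..s}. fst p - r *\<^sub>R snd p \<in> \<Omega>) (nhds (y, v))" .
    show ?thesis
      using base eventually_at_within_if_nhds[OF decr] eventually_at_within_if_nhds[OF far]
    proof eventually_elim
      case (elim p)
      show ?case
      proof
        fix r assume r: "r \<in> {0..s}"
        consider "r = 0" | "0 < r" "r \<le> \<delta>" | "\<delta> \<le> r" using r by fastforce
        then show "fst p - r *\<^sub>R snd p \<in> closure \<Omega>"
        proof cases
          case 2
          then have "\<xi> (fst p - r *\<^sub>R snd p) < \<xi> (fst p)" using elim(2) by simp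
          then have "\<xi> (fst p - r *\<^sub>R snd p) < 0" using \<xi>_le_0_if_closure[OF elim(1)] by simp
          then show ?thesis using closure_subset by (fastforce simp: dom_def)
        next
          case 3
          then show ?thesis using elim(3) r closure_subset[of \<Omega>] by auto
        qed (use elim in simp)
      qed
    qed
  qed
  then show ?thesis using s(1) by (simp add: back_times_def)
qed

lemma eventually_exit_time_gt:
  assumes yv: "(y, v) \<in> nongrazing_moving" and l: "l < exit_time y v"
  shows "eventually (\<lambda>p. l < exit_time (fst p) (snd p)) (at (y, v) within nongrazing_moving)"
proof -
  have mem: "eventually (\<lambda>p. nongrazing (fst p) (snd p) \<and> snd p \<noteq> 0) (at (y, v) within nongrazing_moving)"
    using eventually_at_within_mem[of nongrazing_moving "(y, v)"]
    by eventually_elim (auto simp: nongrazing_moving_def)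
  show ?thesis
  proof (cases "l < 0")
    case True
    show ?thesis using mem
      by eventually_elim (use True exit_time_nonneg in \<open>force simp: nongrazing_def\<close>)
  next
    case False
    define s where "s = (l + exit_time y v) / 2"
    have s: "0 \<le> s" "s < exit_time y v" "l < s" using False l unfolding s_def by auto
    show ?thesis using eventually_in_back_times[OF yv s(1,2)] mem
      by eventually_elim (use s le_exit_time in fastforce)
  qed
qed

lemma eventually_exit_time_lt:
  assumes yv: "(y, v) \<in> nongrazing_moving" and u: "exit_time y v < u"
  shows "eventually (\<lambda>p. exit_time (fst p) (snd p) < u) (at (y, v) within nongrazing_moving)"
proof -
  have ng: "nongrazing y v" and v: "v \<noteq> 0" using yv by (auto simp: nongrazing_moving_def)
  have t0: "0 \<le> exit_time y v" using ng v exit_time_nonneg by (simp add: nongrazing_def)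
  obtain e where e: "e > 0" "\<And>s. exit_time y v < s \<Longrightarrow> s < exit_time y v + e \<Longrightarrow> \<xi> (y - s *\<^sub>R v) > 0"
    using \<xi>_pos_after_exit_time[OF ng v] by blast
  define s where "s = min u (exit_time y v + e / 2)"
  have s: "exit_time y v < s" "s \<le> u" "\<xi> (y - s *\<^sub>R v) > 0" using u e unfolding s_def by auto
  have "((\<lambda>p. \<xi> (fst p - s *\<^sub>R snd p)) \<longlongrightarrow> \<xi> (y - s *\<^sub>R v)) (at (y, v) within nongrazing_moving)"
    by (intro continuous_on_tendsto_compose[OF continuous_on_\<xi>[of UNIV]] tendsto_eq_intros) auto
  then have "eventually (\<lambda>p. \<xi> (fst p - s *\<^sub>R snd p) > 0) (at (y, v) within nongrazing_moving)"
    using s(3) by (rule order_tendstoD)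
  then show ?thesis
    using eventually_at_within_mem[of nongrazing_moving "(y, v)"]
  proof eventually_elim
    case (elim p)
    have "\<not> s \<le> exit_time (fst p) (snd p)"
    proof
      assume "s \<le> exit_time (fst p) (snd p)"
      then have "fst p - s *\<^sub>R snd p \<in> closure \<Omega>"
        using elim(2) s t0 by (intro backward_in_closure) (auto simp: nongrazing_moving_def nongrazing_def)
      then show False using \<xi>_le_0_if_closure elim(1) by fastforce
    qed
    then show ?case using s by simp
  qed
qed

lemma continuous_exit_time:
  assumes "(y, v) \<in> nongrazing_moving"
  shows "continuous (at (y, v) within nongrazing_moving) (\<lambda>p. exit_time (fst p) (snd p))"
  unfolding continuous_within
  by (simp only: fst_conv snd_conv)
    (intro order_tendstoI eventually_exit_time_gt eventually_exit_time_lt assms)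

end

section \<open>Continuity of the mild solution\<close>

locale collision_source = strictly_convex_domain +
  fixes q :: "real \<Rightarrow> real^3 \<Rightarrow> real^3 \<Rightarrow> real" and \<nu> :: "real^3 \<Rightarrow> real" and M :: real
  assumes continuous_\<nu>: "continuous_on UNIV \<nu>"
    and continuous_q: "continuous_on ({0<..} \<times> \<Omega> \<times> UNIV) (\<lambda>(t, x, v). q t x v)"
    and q_bound: "\<And>t x v. 0 \<le> t \<Longrightarrow> x \<in> \<Omega> \<Longrightarrow> \<bar>q t x v\<bar> \<le> M * \<nu> v"
begin

definition source_integral :: "real \<times> (real^3) \<times> (real^3) \<times> real \<Rightarrow> real" where
  "source_integral = (\<lambda>(t0, x0, w, \<tau>).
     integral {0..\<tau>} (\<lambda>s. exp (- \<nu> w * (\<tau> - s)) * q (t0 + s) (x0 + s *\<^sub>R w) w))"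

definition admissible_segments :: "(real \<times> (real^3) \<times> (real^3) \<times> real) set" where
  "admissible_segments = {(t0, x0, w, \<tau>). 0 \<le> t0 \<and> 0 \<le> \<tau> \<and>
     (\<forall>s\<in>{0..\<tau>}. x0 + s *\<^sub>R w \<in> closure \<Omega>) \<and> (w = 0 \<longrightarrow> x0 \<in> \<Omega>)}"

lemma admissible_segment_interior:
  "(t0, x0, w, \<tau>) \<in> admissible_segments \<Longrightarrow> 0 < s \<Longrightarrow> s < \<tau> \<Longrightarrow> x0 + s *\<^sub>R w \<in> \<Omega>"
  unfolding admissible_segments_def using chord_interior_in_\<Omega>[of w 0 s \<tau> x0] by (cases "w = 0") auto

lemma isCont_q: "0 < t \<Longrightarrow> x \<in> \<Omega> \<Longrightarrow> isCont (\<lambda>(t, x, v). q t x v) (t, x, v)"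
  using continuous_q open_\<Omega> by (simp add: continuous_on_eq_continuous_at open_Times)

lemma abs_source_integrand_le:
  assumes "\<bar>\<nu> w\<bar> \<le> N" "0 \<le> \<sigma>" "\<sigma> \<le> B" "0 \<le> t" "x \<in> \<Omega>"
  shows "\<bar>exp (- \<nu> w * \<sigma>) * q t x w\<bar> \<le> exp (N * B) * (\<bar>M\<bar> * N)"
proof -
  have "- \<nu> w * \<sigma> \<le> N * B"
    using assms(1-3) mult_mono[of "- \<nu> w" N \<sigma> B] by auto
  then have "exp (- \<nu> w * \<sigma>) \<le> exp (N * B)" by simp
  moreover have "\<bar>q t x w\<bar> \<le> \<bar>M\<bar> * N"
    using q_bound[OF assms(4,5), of w] abs_ge_self[of "M * \<nu> w"] mult_left_mono[OF assms(1), of "\<bar>M\<bar>"]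
    by (simp add: abs_mult)
  ultimately show ?thesis unfolding abs_mult by (intro mult_mono) auto
qed

lemma tendsto_source_integrand:
  assumes lim: "(T \<longlongrightarrow> t) F" "(X \<longlongrightarrow> x) F" "(W \<longlongrightarrow> w) F" "(S \<longlongrightarrow> \<tau>) F" "(\<sigma> \<longlongrightarrow> s) F"
    and "0 < t + s" "x + s *\<^sub>R w \<in> \<Omega>"
  shows "((\<lambda>k. exp (- \<nu> (W k) * (S k - \<sigma> k)) * q (T k + \<sigma> k) (X k + \<sigma> k *\<^sub>R W k) (W k))
    \<longlongrightarrow> exp (- \<nu> w * (\<tau> - s)) * q (t + s) (x + s *\<^sub>R w) w) F"
proof -
  have "isCont (\<lambda>(t, x, v). q t x v) (t + s, x + s *\<^sub>R w, w)"
    using assms(6,7) by (rule isCont_q)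
  moreover have "((\<lambda>k. (T k + \<sigma> k, X k + \<sigma> k *\<^sub>R W k, W k)) \<longlongrightarrow> (t + s, x + s *\<^sub>R w, w)) F"
    by (intro tendsto_intros lim)
  ultimately have "((\<lambda>k. q (T k + \<sigma> k) (X k + \<sigma> k *\<^sub>R W k) (W k)) \<longlongrightarrow> q (t + s) (x + s *\<^sub>R w) w) F"
    using isCont_tendsto_compose by fastforce
  moreover have "((\<lambda>k. \<nu> (W k)) \<longlongrightarrow> \<nu> w) F"
    using continuous_on_tendsto_compose[OF continuous_\<nu> lim(3)] by simp
  ultimately show ?thesis by (intro tendsto_intros lim)
qed

lemma continuous_source_integral:
  assumes "p \<in> admissible_segments"
  shows "continuous (at p within admissible_segments) source_integral"
proof (rule continuous_within_sequentiallyI)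
  fix P assume P: "P \<longlonglongrightarrow> p" "\<forall>n. P n \<in> admissible_segments"
  obtain t0 x0 w \<tau> where p: "p = (t0, x0, w, \<tau>)" by (cases p) auto
  define T X W S where "T k = fst (P k)" and "X k = fst (snd (P k))" and "W k = fst (snd (snd (P k)))"
    and "S k = snd (snd (snd (P k)))" for k
  have P_eq: "P k = (T k, X k, W k, S k)" for k by (simp add: T_def X_def W_def S_def)
  have adm: "(T k, X k, W k, S k) \<in> admissible_segments" for k using P(2) P_eq by metis
  have lim: "T \<longlonglongrightarrow> t0" "X \<longlonglongrightarrow> x0" "W \<longlonglongrightarrow> w" "S \<longlonglongrightarrow> \<tau>"
    using tendsto_fst[OF P(1)] tendsto_fst[OF tendsto_snd[OF P(1)]]
      tendsto_fst[OF tendsto_snd[OF tendsto_snd[OF P(1)]]] tendsto_snd[OF tendsto_snd[OF tendsto_snd[OF P(1)]]]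
    unfolding T_def X_def W_def S_def p by simp_all
  have nonneg: "0 \<le> T k" "0 \<le> S k" for k using adm[of k] by (auto simp: admissible_segments_def)
  have "(\<lambda>k. \<nu> (W k)) \<longlonglongrightarrow> \<nu> w"
    using continuous_on_tendsto_compose[OF continuous_\<nu> lim(3)] by simp
  then obtain N where N: "\<And>k. \<bar>\<nu> (W k)\<bar> \<le> N"
    using convergent_imp_Bseq[OF convergentI] by (metis BseqE real_norm_def)
  obtain B where B: "\<And>k. S k \<le> B"
    using convergent_imp_Bseq[OF convergentI[OF lim(4)]] by (metis BseqE real_norm_def abs_le_D1)
  let ?g = "\<lambda>k s. exp (- \<nu> (W k) * (S k - s)) * q (T k + s) (X k + s *\<^sub>R W k) (W k)"
  have "(\<lambda>k. integral {0..S k} (?g k))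
      \<longlonglongrightarrow> integral {0..\<tau>} (\<lambda>s. exp (- \<nu> w * (\<tau> - s)) * q (t0 + s) (x0 + s *\<^sub>R w) w)"
  proof (rule tendsto_integral_varying_interval[OF lim(4) nonneg(2)])
    show "continuous_on {0<..<S k} (?g k)" for k
    proof (intro continuous_at_imp_continuous_on ballI)
      fix s assume s: "s \<in> {0<..<S k}"
      have "0 < T k + s" "X k + s *\<^sub>R W k \<in> \<Omega>"
        using s nonneg[of k] admissible_segment_interior[OF adm[of k]] by auto
      then show "isCont (?g k) s"
        unfolding isCont_def by (intro tendsto_source_integrand tendsto_const tendsto_ident_at)
    qed
    show "\<bar>?g k s\<bar> \<le> exp (N * B) * (\<bar>M\<bar> * N)" if "s \<in> {0<..<S k}" for k s
      using that B[of k] nonneg[of k] admissible_segment_interior[OF adm[of k], of s]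
      by (intro abs_source_integrand_le N) auto
    show "(\<lambda>k. ?g k s) \<longlonglongrightarrow> exp (- \<nu> w * (\<tau> - s)) * q (t0 + s) (x0 + s *\<^sub>R w) w"
      if "0 < s" "s < \<tau>" for s
      using that LIMSEQ_le_const[OF lim(1)] nonneg admissible_segment_interior assms
      by (intro tendsto_source_integrand lim tendsto_const) (force simp: p)+
  qed
  then show "(\<lambda>n. source_integral (P n)) \<longlonglongrightarrow> source_integral p"
    by (simp add: P_eq p source_integral_def)
qed

end

locale bounce_back_solution = collision_source +
  fixes h0 :: "real^3 \<Rightarrow> real^3 \<Rightarrow> real" and h :: "real \<Rightarrow> real^3 \<Rightarrow> real^3 \<Rightarrow> real"
  assumes continuous_h0: "continuous_on ((closure \<Omega> \<times> UNIV) - gamma_zero \<xi>) (\<lambda>(x, v). h0 x v)"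
    and compatible: "\<forall>(x, v)\<in>gamma_minus \<xi>. h0 x v = h0 x (- v)"
    and initial: "\<And>x v. x \<in> closure \<Omega> \<Longrightarrow> h 0 x v = h0 x v"
    and bounce_back: "\<And>t x v. t > 0 \<Longrightarrow> x \<in> frontier \<Omega> \<Longrightarrow> h t x v = h t x (- v)"
    and duhamel: "\<And>t \<tau> x v. 0 \<le> t \<Longrightarrow> 0 \<le> \<tau> \<Longrightarrow> (\<forall>s\<in>{0..\<tau>}. x + s *\<^sub>R v \<in> closure \<Omega>) \<Longrightarrow>
        h (t + \<tau>) (x + \<tau> *\<^sub>R v) v = exp (- \<nu> v * \<tau>) * h t x v + source_integral (t, x, v, \<tau>)"
begin

definition H :: "real \<times> (real^3) \<times> (real^3) \<Rightarrow> real" where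
  "H = (\<lambda>(t, x, v). h t x v)"

definition state_space :: "(real \<times> (real^3) \<times> (real^3)) set" where
  "state_space = {0..} \<times> ((closure \<Omega> \<times> UNIV) - gamma_zero \<xi>)"

lemma mem_state_space: "(t, x, v) \<in> state_space \<longleftrightarrow> 0 \<le> t \<and> nongrazing x v"
  unfolding state_space_def nongrazing_iff by auto

lemma continuous_h0_at:
  assumes "nongrazing x v"
  shows "continuous (at (x, v) within closure \<Omega> \<times> UNIV) (\<lambda>(x, v). h0 x v)"
proof -
  have gz: "gamma_zero \<xi> = (frontier \<Omega> \<times> UNIV) \<inter> ((\<lambda>p. D\<xi> (fst p) (snd p)) -` {0})"
    unfolding gamma_zero_def using normal_inner_sign by auto
  have "closed (gamma_zero \<xi>)"
    unfolding gz by (intro closed_Int closed_Times closed_vimage continuous_on_D\<xi>) auto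
  moreover have xv: "(x, v) \<notin> gamma_zero \<xi>" "x \<in> closure \<Omega>" using assms nongrazing_iff by auto
  ultimately have "at (x, v) within (closure \<Omega> \<times> UNIV) - gamma_zero \<xi> = at (x, v) within closure \<Omega> \<times> UNIV"
    by (intro at_within_nhd[of _ "- gamma_zero \<xi>"]) auto
  moreover have "continuous (at (x, v) within (closure \<Omega> \<times> UNIV) - gamma_zero \<xi>) (\<lambda>(x, v). h0 x v)"
    using continuous_h0 xv by (simp add: continuous_on_eq_continuous_within)
  ultimately show ?thesis by simp
qed

definition free_states :: "(real \<times> (real^3) \<times> (real^3)) set" where
  "free_states = {(t, x, v) \<in> state_space. t \<in> back_times x v}"

definition free_flight :: "real \<times> (real^3) \<times> (real^3) \<Rightarrow> real" where
  "free_flight = (\<lambda>(t, x, v). exp (- \<nu> v * t) * h0 (x - t *\<^sub>R v) v + source_integral (0, x - t *\<^sub>R v, v, t))"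

lemma H_eq_free_flight: "p \<in> free_states \<Longrightarrow> H p = free_flight p"
proof -
  assume "p \<in> free_states"
  then obtain t x v where p: "p = (t, x, v)" and t: "0 \<le> t" "t \<in> back_times x v"
    by (auto simp: free_states_def mem_state_space)
  then have "x - t *\<^sub>R v \<in> closure \<Omega>" by (auto simp: back_times_def)
  moreover have "h (0 + t) ((x - t *\<^sub>R v) + t *\<^sub>R v) v
      = exp (- \<nu> v * t) * h 0 (x - t *\<^sub>R v) v + source_integral (0, x - t *\<^sub>R v, v, t)"
    using t back_times_forward by (intro duhamel) auto
  ultimately show ?thesis by (simp add: p H_def free_flight_def initial)
qed

lemma nongrazing_free_start:
  assumes "(t, x, v) \<in> free_states"
  shows "nongrazing (x - t *\<^sub>R v) v"
proof -
  have t: "0 \<le> t" "t \<in> back_times x v" and ng: "nongrazing x v"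
    using assms by (auto simp: free_states_def mem_state_space)
  show ?thesis unfolding nongrazing_def
  proof (intro conjI impI)
    show "x - t *\<^sub>R v \<in> closure \<Omega>" using t by (auto simp: back_times_def)
    assume fr: "x - t *\<^sub>R v \<in> frontier \<Omega>"
    consider "v = 0" | "t = 0" | "v \<noteq> 0" "t \<noteq> 0" by blast
    then show "D\<xi> (x - t *\<^sub>R v) v \<noteq> 0"
    proof cases
      case 1
      then show ?thesis using ng fr nongrazing_zero_iff by (simp add: frontier_\<Omega>)
    next
      case 2
      then show ?thesis using ng fr by (simp add: nongrazing_def)
    next
      case 3
      have "D\<xi> (x - t *\<^sub>R v) v < 0"
        using 3 t back_times_forward[OF t(2)] by (intro D\<xi>_neg_if_chord[OF \<xi>_frontier[OF fr], where \<tau> = t]) auto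
      then show ?thesis by simp
    qed
  qed
qed

lemma free_segment_admissible: "(t, x, v) \<in> free_states \<Longrightarrow> (0, x - t *\<^sub>R v, v, t) \<in> admissible_segments"
  using back_times_forward nongrazing_zero_iff
  by (auto simp: free_states_def mem_state_space admissible_segments_def)

lemma continuous_free_flight:
  assumes p: "p \<in> free_states"
  shows "continuous (at p within free_states) free_flight"
proof -
  obtain t x v where p_eq: "p = (t, x, v)" by (cases p) auto
  let ?start = "\<lambda>p::real \<times> (real^3) \<times> (real^3). (fst (snd p) - fst p *\<^sub>R snd (snd p), snd (snd p))"
  let ?seg = "\<lambda>p::real \<times> (real^3) \<times> (real^3). (0::real, fst (snd p) - fst p *\<^sub>R snd (snd p), snd (snd p), fst p)"
  have "?start ` free_states \<subseteq> closure \<Omega> \<times> UNIV"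
  proof
    fix z assume "z \<in> ?start ` free_states"
    then obtain t x v where "(t, x, v) \<in> free_states" "z = (x - t *\<^sub>R v, v)" by auto
    then show "z \<in> closure \<Omega> \<times> UNIV" by (simp add: free_states_def back_times_def)
  qed
  moreover have "continuous (at (?start p) within closure \<Omega> \<times> UNIV) (\<lambda>(x, v). h0 x v)"
    using continuous_h0_at nongrazing_free_start p unfolding p_eq by simp
  ultimately have "continuous (at (?start p) within ?start ` free_states) (\<lambda>(x, v). h0 x v)"
    by (rule continuous_within_subset[rotated])
  moreover have "continuous (at p within free_states) ?start" by (intro continuous_intros)
  ultimately have h0: "continuous (at p within free_states) (\<lambda>p. h0 (fst (?start p)) (snd (?start p)))"
    using continuous_within_compose2[of p free_states ?start "\<lambda>(x, v). h0 x v"] by simp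
  have "?seg ` free_states \<subseteq> admissible_segments"
  proof
    fix z assume "z \<in> ?seg ` free_states"
    then obtain t x v where "(t, x, v) \<in> free_states" "z = (0, x - t *\<^sub>R v, v, t)" by auto
    then show "z \<in> admissible_segments" using free_segment_admissible by simp
  qed
  moreover have "?seg p \<in> admissible_segments" using free_segment_admissible p unfolding p_eq by simp
  ultimately have "continuous (at (?seg p) within ?seg ` free_states) source_integral"
    using continuous_source_integral continuous_within_subset by blast
  moreover have "continuous (at p within free_states) ?seg" by (intro continuous_intros)
  ultimately have src: "continuous (at p within free_states) (\<lambda>p. source_integral (?seg p))"
    using continuous_within_compose2[of p free_states ?seg source_integral] by simp
  have \<nu>: "continuous (at p within free_states) (\<lambda>p. exp (- \<nu> (snd (snd p)) * fst p))"
    by (intro continuous_intros continuous_within_compose2[OF _ continuous_on_imp_continuous_within[OF continuous_\<nu>]]) auto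
  have "free_flight = (\<lambda>p. exp (- \<nu> (snd (snd p)) * fst p) * h0 (fst (?start p)) (snd (?start p))
      + source_integral (?seg p))"
    by (auto simp: free_flight_def fun_eq_iff)
  with \<nu> h0 src show ?thesis by (simp add: continuous_intros)
qed

lemma continuous_H_if_eventually_free:
  assumes p: "p \<in> free_states" and ev: "eventually (\<lambda>x. x \<in> free_states) (at p within state_space)"
  shows "continuous (at p within state_space) H"
proof -
  have "(free_flight \<longlongrightarrow> free_flight p) (at p within free_states)"
    using continuous_free_flight[OF p] by (simp add: continuous_within)
  moreover have "eventually (\<lambda>y. free_flight y = H y) (at p within free_states)"
    using eventually_at_within_mem[of free_states p] by eventually_elim (simp add: H_eq_free_flight)
  ultimately have "(H \<longlongrightarrow> free_flight p) (at p within free_states)"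
    by (rule Lim_transform_eventually)
  then have lim: "(H \<longlongrightarrow> H p) (at p within free_states)" using H_eq_free_flight[OF p] by simp
  have "eventually (\<lambda>x. x \<in> free_states \<union> free_states) (at p within state_space)"
    using ev by simp
  with lim show ?thesis
    unfolding continuous_within by (intro tendsto_at_within_if_eventually_Un[OF lim lim])
qed

lemma moving_state_nongrazing:
  "p \<in> state_space \<Longrightarrow> snd (snd p) \<noteq> 0 \<Longrightarrow> snd p \<in> nongrazing_moving"
  by (cases p) (simp add: mem_state_space nongrazing_moving_def)

lemma state_position_closure: "p \<in> state_space \<Longrightarrow> fst (snd p) \<in> closure \<Omega>"
  by (cases p) (simp add: mem_state_space nongrazing_def)

lemma eventually_velocity_nonzero:
  fixes p :: "real \<times> (real^3) \<times> (real^3)"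
  assumes "snd (snd p) \<noteq> 0"
  shows "eventually (\<lambda>x. snd (snd x) \<noteq> 0) (at p within S)"
proof -
  have "((\<lambda>x. snd (snd x)) \<longlongrightarrow> snd (snd p)) (at p within S)" by (intro tendsto_intros)
  then have "eventually (\<lambda>x. snd (snd x) \<in> - {0}) (at p within S)"
    using assms by (intro topological_tendstoD) auto
  then show ?thesis by simp
qed

definition state_exit_time :: "real \<times> (real^3) \<times> (real^3) \<Rightarrow> real" where
  "state_exit_time p = exit_time (fst (snd p)) (snd (snd p))"

definition exit_point :: "real \<times> (real^3) \<times> (real^3) \<Rightarrow> real^3" where
  "exit_point p = fst (snd p) - state_exit_time p *\<^sub>R snd (snd p)"

text \<open>The state at the last bounce, with the velocity just before the bounce.\<close>
definition reflected_state :: "real \<times> (real^3) \<times> (real^3) \<Rightarrow> real \<times> (real^3) \<times> (real^3)" where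
  "reflected_state p = (fst p - state_exit_time p, exit_point p, - snd (snd p))"

definition bounced_states :: "(real \<times> (real^3) \<times> (real^3)) set" where
  "bounced_states = {p \<in> state_space. snd (snd p) \<noteq> 0 \<and> state_exit_time p < fst p}"

lemma tendsto_state_exit_time:
  assumes p: "p \<in> state_space" "snd (snd p) \<noteq> 0"
    and S: "\<And>x. x \<in> S \<Longrightarrow> x \<in> state_space \<and> snd (snd x) \<noteq> 0"
  shows "(state_exit_time \<longlongrightarrow> state_exit_time p) (at p within S)"
proof -
  have "continuous (at (snd p) within nongrazing_moving) (\<lambda>p. exit_time (fst p) (snd p))"
    using continuous_exit_time[of "fst (snd p)" "snd (snd p)"] moving_state_nongrazing[OF p] by simp
  moreover have "eventually (\<lambda>x. snd x \<in> nongrazing_moving) (at p within S)"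
    using eventually_at_within_mem[of S p] by eventually_elim (use S moving_state_nongrazing in blast)
  moreover have "(snd \<longlongrightarrow> snd p) (at p within S)" by (intro tendsto_intros)
  ultimately show ?thesis
    unfolding state_exit_time_def by (rule continuous_within_tendsto_compose)
qed

lemma tendsto_state_exit_time_state_space:
  assumes p: "p \<in> state_space" "snd (snd p) \<noteq> 0"
  shows "(state_exit_time \<longlongrightarrow> state_exit_time p) (at p within state_space)"
proof -
  let ?S = "{x \<in> state_space. snd (snd x) \<noteq> 0}"
  have "(state_exit_time \<longlongrightarrow> state_exit_time p) (at p within ?S)"
    by (rule tendsto_state_exit_time[OF p]) auto
  moreover have "eventually (\<lambda>x. x \<in> ?S \<union> ?S) (at p within state_space)"
    using eventually_velocity_nonzero[OF p(2)] eventually_at_within_mem[of state_space p]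
    by eventually_elim auto
  ultimately show ?thesis using tendsto_at_within_if_eventually_Un by blast
qed

lemma state_exit_time_nonneg: "p \<in> state_space \<Longrightarrow> snd (snd p) \<noteq> 0 \<Longrightarrow> 0 \<le> state_exit_time p"
  unfolding state_exit_time_def using state_position_closure exit_time_nonneg by blast

lemma free_if_before_exit:
  assumes "p \<in> state_space" "snd (snd p) \<noteq> 0" "fst p \<le> state_exit_time p"
  shows "p \<in> free_states"
proof -
  obtain t x v where p: "p = (t, x, v)" by (cases p) auto
  have "t \<in> back_times x v"
    using assms backward_in_closure[of x v] unfolding p state_exit_time_def back_times_def
    by (auto simp: mem_state_space nongrazing_def)
  then show ?thesis using assms(1) by (simp add: p free_states_def)
qed

lemma exit_point_frontier_state: "p \<in> state_space \<Longrightarrow> snd (snd p) \<noteq> 0 \<Longrightarrow> exit_point p \<in> frontier \<Omega>"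
  unfolding exit_point_def state_exit_time_def using exit_point_frontier state_position_closure by blast

lemma D\<xi>_exit_point_state_neg:
  "p \<in> state_space \<Longrightarrow> snd (snd p) \<noteq> 0 \<Longrightarrow> D\<xi> (exit_point p) (snd (snd p)) < 0"
  unfolding exit_point_def state_exit_time_def using D\<xi>_exit_point_neg
  by (cases p) (simp add: mem_state_space)

lemma exit_point_segment:
  assumes "p \<in> state_space" "snd (snd p) \<noteq> 0" "s \<in> {0..state_exit_time p}"
  shows "exit_point p + s *\<^sub>R snd (snd p) \<in> closure \<Omega>"
proof -
  have "fst (snd p) - (state_exit_time p - s) *\<^sub>R snd (snd p) \<in> closure \<Omega>"
    using assms backward_in_closure[OF state_position_closure[OF assms(1)] assms(2)]
    unfolding state_exit_time_def by auto
  then show ?thesis unfolding exit_point_def by (simp add: algebra_simps)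
qed

lemma reflected_state_in_state_space:
  assumes "p \<in> state_space" "snd (snd p) \<noteq> 0" "state_exit_time p \<le> fst p"
  shows "reflected_state p \<in> state_space"
proof -
  have "exit_point p \<in> closure \<Omega>" using exit_point_frontier_state[OF assms(1,2)] frontier_\<Omega> by auto
  moreover have "D\<xi> (exit_point p) (- snd (snd p)) \<noteq> 0"
    using D\<xi>_exit_point_state_neg[OF assms(1,2)] by (simp add: D\<xi>_minus)
  ultimately show ?thesis
    using assms(3) by (simp add: reflected_state_def mem_state_space nongrazing_def)
qed

lemma H_eq_after_bounce:
  assumes p: "p \<in> state_space" "snd (snd p) \<noteq> 0" "state_exit_time p < fst p"
  shows "H p = exp (- \<nu> (snd (snd p)) * state_exit_time p) * H (reflected_state p)
    + source_integral (fst p - state_exit_time p, exit_point p, snd (snd p), state_exit_time p)"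
proof -
  obtain t x v where p_eq: "p = (t, x, v)" by (cases p) auto
  let ?T = "state_exit_time p"
  have "h ((t - ?T) + ?T) (exit_point p + ?T *\<^sub>R v) v
      = exp (- \<nu> v * ?T) * h (t - ?T) (exit_point p) v + source_integral (t - ?T, exit_point p, v, ?T)"
    using p exit_point_segment[OF p(1,2)] state_exit_time_nonneg[OF p(1,2)] unfolding p_eq
    by (intro duhamel) auto
  moreover have "h (t - ?T) (exit_point p) v = h (t - ?T) (exit_point p) (- v)"
    using p exit_point_frontier_state[OF p(1,2)] unfolding p_eq by (intro bounce_back) auto
  moreover have "exit_point p + ?T *\<^sub>R v = x" unfolding exit_point_def p_eq by simp
  ultimately show ?thesis unfolding H_def reflected_state_def p_eq by simp
qed

text \<open>Bounce-back sends the particle back along the same chord, so consecutive bounces are at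
  least \<open>state_exit_time p\<close> apart and only finitely many occur in bounded time.\<close>
lemma state_exit_time_reflected:
  assumes p: "p \<in> state_space" "snd (snd p) \<noteq> 0"
  shows "0 < state_exit_time (reflected_state p)" "state_exit_time p \<le> state_exit_time (reflected_state p)"
proof -
  have fr: "exit_point p \<in> frontier \<Omega>" using exit_point_frontier_state[OF p] .
  have v: "- snd (snd p) \<noteq> 0" using p by simp
  have "0 < D\<xi> (exit_point p) (- snd (snd p))"
    using D\<xi>_exit_point_state_neg[OF p] by (simp add: D\<xi>_minus)
  then show "0 < state_exit_time (reflected_state p)"
    using exit_time_pos_iff[OF fr v] by (simp add: state_exit_time_def reflected_state_def)
  have "state_exit_time p \<in> back_times (exit_point p) (- snd (snd p))"
    using state_exit_time_nonneg[OF p] exit_point_segment[OF p] by (auto simp: back_times_def)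
  then show "state_exit_time p \<le> state_exit_time (reflected_state p)"
    using le_exit_time[OF v] by (simp add: state_exit_time_def reflected_state_def)
qed

lemma continuous_H_before_bounce:
  assumes p: "p \<in> state_space" "snd (snd p) \<noteq> 0" "fst p < state_exit_time p"
  shows "continuous (at p within state_space) H"
proof (rule continuous_H_if_eventually_free)
  show "p \<in> free_states" using free_if_before_exit p by simp
  have "((\<lambda>x. state_exit_time x - fst x) \<longlongrightarrow> state_exit_time p - fst p) (at p within state_space)"
    by (intro tendsto_intros tendsto_state_exit_time_state_space p)
  then have "eventually (\<lambda>x. state_exit_time x - fst x > 0) (at p within state_space)"
    using p(3) by (intro order_tendstoD(1)) auto
  then show "eventually (\<lambda>x. x \<in> free_states) (at p within state_space)"
    using eventually_velocity_nonzero[OF p(2)] eventually_at_within_mem[of state_space p]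
    by eventually_elim (auto intro: free_if_before_exit)
qed

lemma continuous_H_at_rest:
  assumes p: "p \<in> state_space" "snd (snd p) = 0"
  shows "continuous (at p within state_space) H"
proof (rule continuous_H_if_eventually_free)
  obtain t y where p_eq: "p = (t, y, 0)" using p(2) by (cases p) auto
  have y: "y \<in> \<Omega>" using p by (simp add: p_eq mem_state_space nongrazing_zero_iff)
  then show "p \<in> free_states"
    using p closure_subset by (auto simp: p_eq free_states_def back_times_def mem_state_space)
  have "eventually (\<lambda>q. \<forall>r\<in>{0..t + 1}. fst q - r *\<^sub>R snd q \<in> \<Omega>) (nhds (y, 0))"
    by (rule eventually_segment_in_open[OF open_\<Omega>]) (use y in simp)
  then have "eventually (\<lambda>x. \<forall>r\<in>{0..t + 1}. fst (snd x) - r *\<^sub>R snd (snd x) \<in> \<Omega>) (at p within state_space)"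
    by (rule eventually_compose_filterlim)
      (use tendsto_snd[OF tendsto_ident_at[of p state_space]] in \<open>simp add: p_eq\<close>)
  moreover have "eventually (\<lambda>x. fst x < t + 1) (at p within state_space)"
    by (rule order_tendstoD(2)) (auto simp: p_eq intro!: tendsto_intros)
  ultimately show "eventually (\<lambda>x. x \<in> free_states) (at p within state_space)"
    using eventually_at_within_mem[of state_space p]
  proof eventually_elim
    case (elim x)
    then have "fst x \<in> back_times (fst (snd x)) (snd (snd x))"
      using closure_subset by (cases x) (fastforce simp: back_times_def mem_state_space)
    then show ?case using elim(3) by (cases x) (simp add: free_states_def)
  qed
qed

lemma tendsto_H_bounced:
  assumes p: "p \<in> state_space" "snd (snd p) \<noteq> 0" "state_exit_time p \<le> fst p"
    and reflected: "continuous (at (reflected_state p) within state_space) H"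
  shows "(H \<longlongrightarrow> exp (- \<nu> (snd (snd p)) * state_exit_time p) * H (reflected_state p)
      + source_integral (fst p - state_exit_time p, exit_point p, snd (snd p), state_exit_time p))
    (at p within bounced_states)"
proof -
  let ?seg = "\<lambda>x. (fst x - state_exit_time x, exit_point x, snd (snd x), state_exit_time x)"
  have T: "(state_exit_time \<longlongrightarrow> state_exit_time p) (at p within bounced_states)"
    by (rule tendsto_state_exit_time[OF p(1,2)]) (auto simp: bounced_states_def)
  have \<nu>: "((\<lambda>x. \<nu> (snd (snd x))) \<longlongrightarrow> \<nu> (snd (snd p))) (at p within bounced_states)"
    by (intro continuous_on_tendsto_compose[OF continuous_\<nu>] tendsto_intros) auto
  have X: "(exit_point \<longlongrightarrow> exit_point p) (at p within bounced_states)"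
    unfolding exit_point_def by (intro tendsto_intros T)
  have "(reflected_state \<longlongrightarrow> reflected_state p) (at p within bounced_states)"
    unfolding reflected_state_def by (intro tendsto_intros T X)
  moreover have "eventually (\<lambda>x. reflected_state x \<in> state_space) (at p within bounced_states)"
    using eventually_at_within_mem[of bounced_states p]
    by eventually_elim (auto simp: bounced_states_def intro: reflected_state_in_state_space)
  ultimately have HR: "((\<lambda>x. H (reflected_state x)) \<longlongrightarrow> H (reflected_state p)) (at p within bounced_states)"
    using continuous_within_tendsto_compose[OF reflected] by blast
  have seg: "?seg x \<in> admissible_segments"
    if "x \<in> state_space" "snd (snd x) \<noteq> 0" "state_exit_time x \<le> fst x" for x
    using that state_exit_time_nonneg exit_point_segment unfolding admissible_segments_def by auto
  have "eventually (\<lambda>x. ?seg x \<in> admissible_segments) (at p within bounced_states)"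
    using eventually_at_within_mem[of bounced_states p]
    by eventually_elim (auto simp: bounced_states_def intro: seg)
  moreover have "(?seg \<longlongrightarrow> ?seg p) (at p within bounced_states)" by (intro tendsto_intros T X)
  ultimately have I: "((\<lambda>x. source_integral (?seg x)) \<longlongrightarrow> source_integral (?seg p)) (at p within bounced_states)"
    by (rule continuous_within_tendsto_compose[OF continuous_source_integral[OF seg[OF p]]])
  have "eventually (\<lambda>x. exp (- \<nu> (snd (snd x)) * state_exit_time x) * H (reflected_state x)
      + source_integral (?seg x) = H x) (at p within bounced_states)"
    using eventually_at_within_mem[of bounced_states p]
    by eventually_elim (auto simp: bounced_states_def H_eq_after_bounce)
  then show ?thesis by (rule Lim_transform_eventually[rotated]) (intro tendsto_intros \<nu> T HR I)
qed

lemma continuous_H_after_bounce: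
  assumes p: "p \<in> state_space" "snd (snd p) \<noteq> 0" "state_exit_time p < fst p"
    and reflected: "continuous (at (reflected_state p) within state_space) H"
  shows "continuous (at p within state_space) H"
proof -
  have lim: "(H \<longlongrightarrow> H p) (at p within bounced_states)"
    using tendsto_H_bounced[OF p(1,2) _ reflected] p H_eq_after_bounce by simp
  have "((\<lambda>x. fst x - state_exit_time x) \<longlongrightarrow> fst p - state_exit_time p) (at p within state_space)"
    by (intro tendsto_intros tendsto_state_exit_time_state_space p)
  then have "eventually (\<lambda>x. fst x - state_exit_time x > 0) (at p within state_space)"
    using p(3) by (intro order_tendstoD(1)) auto
  then have "eventually (\<lambda>x. x \<in> bounced_states \<union> bounced_states) (at p within state_space)"
    using eventually_velocity_nonzero[OF p(2)] eventually_at_within_mem[of state_space p]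
    by eventually_elim (auto simp: bounced_states_def)
  then show ?thesis unfolding continuous_within by (rule tendsto_at_within_if_eventually_Un[OF lim lim])
qed

text \<open>At the bounce time itself both one-sided descriptions meet; they agree thanks to the
  compatibility condition on \<open>h\<^sub>0\<close> at the exit point.\<close>
lemma continuous_H_at_bounce:
  assumes p: "p \<in> state_space" "snd (snd p) \<noteq> 0" "fst p = state_exit_time p"
  shows "continuous (at p within state_space) H"
proof -
  obtain t y v where p_eq: "p = (t, y, v)" by (cases p) auto
  have free: "p \<in> free_states" using free_if_before_exit p by simp
  have "(free_flight \<longlongrightarrow> free_flight p) (at p within free_states)"
    using continuous_free_flight[OF free] by (simp add: continuous_within)
  moreover have "eventually (\<lambda>x. free_flight x = H x) (at p within free_states)"
    using eventually_at_within_mem[of free_states p] by eventually_elim (simp add: H_eq_free_flight)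
  ultimately have lim_free: "(H \<longlongrightarrow> H p) (at p within free_states)"
    using H_eq_free_flight[OF free] Lim_transform_eventually by fastforce
  have refl: "reflected_state p = (0, exit_point p, - v)"
    using p unfolding reflected_state_def p_eq by simp
  have "continuous (at (reflected_state p) within state_space) H"
  proof (rule continuous_H_before_bounce)
    show "reflected_state p \<in> state_space" using reflected_state_in_state_space p by simp
    show "snd (snd (reflected_state p)) \<noteq> 0" using p refl p_eq by simp
    show "fst (reflected_state p) < state_exit_time (reflected_state p)"
      using state_exit_time_reflected(1)[OF p(1,2)] refl by simp
  qed
  moreover have "H (reflected_state p) = h0 (exit_point p) v"
  proof -
    have "exit_point p \<in> frontier \<Omega>" using exit_point_frontier_state[OF p(1,2)] .
    moreover have "(exit_point p, v) \<in> gamma_minus \<xi>"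
      using calculation D\<xi>_exit_point_state_neg[OF p(1,2)] normal_inner_sign
      by (simp add: gamma_minus_def p_eq)
    ultimately show ?thesis
      using compatible initial frontier_\<Omega> by (auto simp: refl H_def)
  qed
  ultimately have lim_bounced: "(H \<longlongrightarrow> H p) (at p within bounced_states)"
    using tendsto_H_bounced[OF p(1,2)] p H_eq_free_flight[OF free]
    by (simp add: free_flight_def exit_point_def p_eq)
  have "eventually (\<lambda>x. x \<in> free_states \<union> bounced_states) (at p within state_space)"
    using eventually_velocity_nonzero[OF p(2)] eventually_at_within_mem[of state_space p]
    by eventually_elim (auto simp: bounced_states_def intro: free_if_before_exit)
  then show ?thesis
    unfolding continuous_within by (rule tendsto_at_within_if_eventually_Un[OF lim_free lim_bounced])
qed

lemma continuous_H_bounces: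
  assumes "p \<in> state_space" "snd (snd p) \<noteq> 0"
    and "fst p - state_exit_time p \<le> real n * state_exit_time (reflected_state p)"
  shows "continuous (at p within state_space) H"
  using assms
proof (induction n arbitrary: p)
  case 0
  then show ?case
    using continuous_H_before_bounce continuous_H_at_bounce by (cases "fst p < state_exit_time p") auto
next
  case (Suc n)
  show ?case
  proof (cases "fst p \<le> state_exit_time p")
    case True
    then show ?thesis
      using Suc.prems continuous_H_before_bounce continuous_H_at_bounce by (cases "fst p < state_exit_time p") auto
  next
    case False
    let ?q = "reflected_state p"
    have q: "?q \<in> state_space" "snd (snd ?q) \<noteq> 0"
      using reflected_state_in_state_space Suc.prems False by (auto simp: reflected_state_def)
    have "fst ?q - state_exit_time ?q = fst p - state_exit_time p - state_exit_time ?q"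
      by (simp add: reflected_state_def)
    also have "\<dots> \<le> real n * state_exit_time ?q" using Suc.prems(3) by (simp add: algebra_simps)
    also have "\<dots> \<le> real n * state_exit_time (reflected_state ?q)"
      using state_exit_time_reflected(2)[OF q] by (intro mult_left_mono) auto
    finally have "continuous (at ?q within state_space) H" using Suc.IH q by blast
    then show ?thesis using continuous_H_after_bounce Suc.prems False by simp
  qed
qed

lemma continuous_on_solution: "continuous_on state_space (\<lambda>(t, x, v). h t x v)"
proof -
  have "continuous (at p within state_space) H" if p: "p \<in> state_space" for p
  proof (cases "snd (snd p) = 0")
    case False
    obtain n where "fst p - state_exit_time p < real n * state_exit_time (reflected_state p)"
      using reals_Archimedean3[OF state_exit_time_reflected(1)[OF p False]] by blast
    then show ?thesis by (intro continuous_H_bounces[OF p False, of n]) simp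
  qed (use continuous_H_at_rest p in blast)
  then show ?thesis by (simp add: continuous_on_eq_continuous_within H_def)
qed

end

lemma bounce_back_solution_if_bb_solution:
  assumes "collision_source \<xi> c q (nu gam q0) M"
    and "continuous_on ((closure (dom \<xi>) \<times> UNIV) - gamma_zero \<xi>) (\<lambda>(x, v). h0 x v)"
    and "\<forall>(x, v)\<in>gamma_minus \<xi>. h0 x v = h0 x (- v)"
    and bb: "bb_solution \<xi> gam q0 h0 q h"
  shows "bounce_back_solution \<xi> c q (nu gam q0) M h0 h"
proof -
  interpret collision_source \<xi> c q "nu gam q0" M by (rule assms(1))
  show ?thesis
  proof unfold_locales
    show "\<And>x v. x \<in> closure \<Omega> \<Longrightarrow> h 0 x v = h0 x v"
      and "\<And>t x v. t > 0 \<Longrightarrow> x \<in> frontier \<Omega> \<Longrightarrow> h t x v = h t x (- v)"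
      using bb unfolding bb_solution_def by blast+
    show "h (t + \<tau>) (x + \<tau> *\<^sub>R v) v = exp (- nu gam q0 v * \<tau>) * h t x v + source_integral (t, x, v, \<tau>)"
      if "0 \<le> t" "0 \<le> \<tau>" "\<forall>s\<in>{0..\<tau>}. x + s *\<^sub>R v \<in> closure \<Omega>" for t \<tau> x v
      using bb that unfolding bb_solution_def source_integral_def by simp
  qed (use assms(2,3) in auto)
qed

theorem mainTheorem14:
  fixes \<xi> :: "real^3 \<Rightarrow> real" and gam :: real and q0 :: "real \<Rightarrow> real"
    and h0 :: "real^3 \<Rightarrow> real^3 \<Rightarrow> real"
    and q h :: "real \<Rightarrow> real^3 \<Rightarrow> real^3 \<Rightarrow> real"
  assumes "smooth3 \<xi>" and "connected (dom \<xi>)" and "bounded (dom \<xi>)"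
    and "\<forall>x. \<xi> x = 0 \<longrightarrow> grad \<xi> x \<noteq> 0"
    and "\<exists>c>0. \<forall>x \<zeta>. \<xi> x \<le> 0 \<longrightarrow> dd \<xi> [\<zeta>, \<zeta>] x \<ge> c * (norm \<zeta>)\<^sup>2"
    and "0 \<le> gam" and "gam \<le> 1"
    and "q0 \<in> borel_measurable borel"
    and "\<exists>C. \<forall>\<theta>. 0 \<le> q0 \<theta> \<and> q0 \<theta> \<le> C * \<bar>cos \<theta>\<bar>"
    and "continuous_on ((closure (dom \<xi>) \<times> UNIV) - gamma_zero \<xi>) (\<lambda>(x, v). h0 x v)"
    and "continuous_on (interior ({0..} \<times> dom \<xi> \<times> UNIV)) (\<lambda>(t, x, v). q t x v)"
    and "\<exists>M. \<forall>t x v. t \<ge> 0 \<longrightarrow> x \<in> dom \<xi> \<longrightarrow> \<bar>q t x v\<bar> \<le> M * nu gam q0 v"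
    and "\<forall>(x, v)\<in>gamma_minus \<xi>. h0 x v = h0 x (- v)"
    and "bb_solution \<xi> gam q0 h0 q h"
  shows "continuous_on ({0..} \<times> ((closure (dom \<xi>) \<times> UNIV) - gamma_zero \<xi>)) (\<lambda>(t, x, v). h t x v)"
proof -
  obtain c where c: "c > 0" "\<forall>x \<zeta>. \<xi> x \<le> 0 \<longrightarrow> dd \<xi> [\<zeta>, \<zeta>] x \<ge> c * (norm \<zeta>)\<^sup>2"
    using assms(5) by blast
  obtain C where C: "\<And>\<theta>. 0 \<le> q0 \<theta> \<and> q0 \<theta> \<le> C * \<bar>cos \<theta>\<bar>" using assms(9) by blast
  obtain M where M: "\<forall>t x v. t \<ge> 0 \<longrightarrow> x \<in> dom \<xi> \<longrightarrow> \<bar>q t x v\<bar> \<le> M * nu gam q0 v"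
    using assms(12) by blast
  interpret strictly_convex_domain \<xi> c
    using assms(1,3,4) c by unfold_locales auto
  have "interior ({0::real..} \<times> dom \<xi> \<times> UNIV) = {0<..} \<times> dom \<xi> \<times> (UNIV :: (real^3) set)"
    using open_\<Omega> by (simp add: interior_Times interior_open interior_real_atLeast)
  then have "continuous_on ({0<..} \<times> dom \<xi> \<times> UNIV) (\<lambda>(t, x, v). q t x v)" using assms(11) by simp
  with continuous_on_nu[OF assms(8) C assms(6,7)] M
  interpret collision_source \<xi> c q "nu gam q0" M by unfold_locales blast+
  interpret bounce_back_solution \<xi> c q "nu gam q0" M h0 h
    by (rule bounce_back_solution_if_bb_solution[OF collision_source_axioms assms(10,13,14)])
  show ?thesis using continuous_on_solution unfolding state_space_def .
qed

end
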